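(* Let $\mathcal I\subset\mathbb K[x^*,y]$ be an $N$-admissible ideal. If $\phi\in S_\omega^M$ is an $\omega$-solution of $\mathcal I$, then its defining data sequence $\mathbf{seq}(\phi)$ is an $\omega$-sequence for $\mathcal I$.
   Context: Let $\mathbb K$ be an algebraically closed field of characteristic zero, $N,M$ positive integers, $\omega\in\mathbb R^N$ with coordinates linearly independent over $\mathbb Q$. $S_\omega$ is the field of $\omega$-positive Puiseux series: formal sums $\phi=\sum_{\alpha\in\mathbb Q^N}c_\alpha x^\alpha$ ($c_\alpha\in\mathbb K$) with exponent set $\mathcal E(\phi)$ contained in $\frac1k\mathbb Z^N$ for some $k$ and $\mathcal E(x^\gamma\phi)\subset\sigma$ for some $\gamma\in\mathbb Q^N$ and some rational polyhedral cone $\sigma$ with $v\cdot\omega\ge0$ on $\sigma$. $\operatorname{ord}_\omega(\phi)=\min_{\alpha\in\mathcal E(\phi)}\omega\cdot\alpha$, $\operatorname{in}_\omega(\phi)$ the term attaining it ($\operatorname{ord}_\omega0=\infty$, $\operatorname{in}_\omega0=0$), componentwise on $S_\omega^M$. Conventions $\infty\cdot a=\infty$ ($a\ne0$), $\infty\cdot0=0$, $\infty>r$; $\Lambda(\eta)=\{i:\eta_i\ne\infty\}$. $\mathbb K[x^*,y]=\mathbb K[x_1^{\pm1},\dots,x_N^{\pm1},y_1,\dots,y_M]$. For $\omega'\in\mathbb R^N$, $\eta\in(\mathbb R\cup\{\infty\})^M$, $f=\sum a_{\alpha,\beta}x^\alpha y^\beta$: $\operatorname{ord}_{\omega',\eta}(f)=\min_{a_{\alpha,\beta}\ne0}(\omega'\cdot\alpha+\eta\cdot\beta)$;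 $\operatorname{in}_{\omega',\eta}(f)$ the sum of terms attaining it if finite, else $0$; $\operatorname{In}_{\omega',\eta}\mathcal J$ generated by $\{\operatorname{in}_{\omega',\eta}f:f\in\mathcal J\}\cup\{y_i:i\notin\Lambda(\eta)\}$. $\tau(\mathcal J)=\{(\omega',\eta): \operatorname{In}_{\omega',\eta}\mathcal J\cap\mathbb K[x^*,(y_i)_{i\in\Lambda(\eta)}]\text{ contains no monomial } cx^\alpha y^\beta, c\ne0\}$. An $\omega$-solution of $\mathcal J$ is $\varphi\in S_\omega^M$ with $f(x,\varphi)=0$ for all $f\in\mathcal J$. $\mathcal I$ is $N$-admissible if, for $J=\mathcal I\cap\mathbb K[x_1,\dots,x_N,y]$, the projection $(x,y)\mapsto x$ from the zero set of $J$ in $\mathbb K^{N+M}$ to $\mathbb K^N$ is dominant with finite generic fibre. An $\omega$-set is $D=\{\eta,\Gamma,c\}$, $\eta\in(\mathbb R\cup\{\infty\})^M$, $\Gamma$ an $M\times N$ matrix over $\mathbb Q\cup\{\infty\}$, $c\in\mathbb K^M$, with: for $i\in\Lambda(\eta)$, $\Gamma_{i,*}\in\mathbb Q^N$, $\omega\cdot\Gamma_{i,*}=\eta_i$, $c_i\ne0$; for $i\notin\Lambda(\eta)$, $\Gamma_{i,*}=(\infty,\dots,\infty)$, $c_i=0$. $\mathfrak M_D=(c_ix^{\Gamma_{i,*}})_i$ (entry $0$ if $i\notin\Lambda(\eta)$). A starting $\omega$-set for $\mathcal J$: an $\omega$-set with $(\omega,\eta)\in\tau(\mathcal J)$ and $c$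 a common zero of $\{f(1,\dots,1,y):f\in\operatorname{In}_{\omega,\eta}\mathcal J\}$. $\mathbf d\Gamma$: least positive integer $k$ with $k\Gamma_{i,j}\in\mathbb Z$ for all finite entries; $x^{rI}=(x_1^r,\dots,x_N^r)$; $\mathcal J_D$ is generated by $\{f(x^{\mathbf d\Gamma I},y+\mathfrak M_D(x^{\mathbf d\Gamma I})):f\in\mathcal J\}$. For an $M$-tuple of monomials $\mathfrak m=(a_1x^{\gamma_1},\dots,a_Mx^{\gamma_M})$, its defining data is $D(\mathfrak m)=\{\operatorname{ord}_\omega\mathfrak m,\Gamma,(a_1,\dots,a_M)\}$, where $\Gamma_{i,*}=\gamma_i$ if $a_i\ne0$ and $\Gamma_{i,*}=(\infty,\dots,\infty)$ if $a_i=0$. The defining data sequence $\mathbf{seq}(\phi)=\{D^{(i)}\}_{i\ge0}$, $D^{(i)}=\{\eta^{(i)},\Gamma^{(i)},c^{(i)}\}$, is defined by $\phi^{(0)}=\phi$, $D^{(0)}=D(\operatorname{in}_\omega\phi)$, and for $i>0$: $\phi^{(i)}=\phi^{(i-1)}(x^{\mathbf d\Gamma^{(i-1)}I})-\mathfrak M_{D^{(i-1)}}(x^{\mathbf d\Gamma^{(i-1)}I})$, $D^{(i)}=D(\operatorname{in}_\omega\phi^{(i)})$. With $\mathcal I^{(0)}=\mathcal I$, $\mathcal I^{(i)}=(\mathcal I^{(i-1)})_{D^{(i-1)}}$, a sequence of $\omega$-sets $\{D^{(i)}\}$ is an $\omega$-sequence for $\mathcal I$ if each $D^{(i)}$ is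 a starting $\omega$-set for $\mathcal I^{(i)}$ and, for $i\ge1$, $\eta^{(i)}_j>\mathbf d\Gamma^{(i-1)}\eta^{(i-1)}_j$ for all $j\in\Lambda(\eta^{(i)})$. *)

theory Defs
  imports "HOL-Library.Poly_Mapping" "HOL-Library.Function_Algebras" "HOL-Library.Product_Plus"
          "HOL-Library.Extended_Real" "HOL-Computational_Algebra.Polynomial"
begin

(* N and M are the cardinalities of the finite index types 'n and 'm.
   The field K is a type 'k :: field_char_0, assumed algebraically closed in the theorem. *)

definition alg_closed :: "'k::field itself \<Rightarrow> bool" where
  "alg_closed _ \<longleftrightarrow> (\<forall>p::'k poly. degree p \<ge> 1 \<longrightarrow> (\<exists>z. poly p z = 0))"

definition Q_lin_indep :: "('n::finite \<Rightarrow> real) \<Rightarrow> bool" where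
  "Q_lin_indep \<omega> \<longleftrightarrow> (\<forall>q::'n \<Rightarrow> rat. (\<Sum>i\<in>UNIV. of_rat (q i) * \<omega> i) = 0 \<longrightarrow> (\<forall>i. q i = 0))"

(* exponent (alpha, beta) of x^alpha y^beta, alpha in Z^N, beta in N^M *)
type_synonym ('n,'m) lexp = "('n \<Rightarrow> int) \<times> ('m \<Rightarrow> nat)"
type_synonym ('n,'m,'k) lpoly = "('n,'m) lexp \<Rightarrow>\<^sub>0 'k"

definition mono :: "'k::zero \<Rightarrow> ('n \<Rightarrow> int) \<Rightarrow> ('m \<Rightarrow> nat) \<Rightarrow> ('n,'m,'k) lpoly" where
  "mono c a b = Poly_Mapping.single (a, b) c"

definition yvar :: "'m \<Rightarrow> ('n,'m,'k::{zero,one}) lpoly" where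
  "yvar j = mono 1 0 (\<lambda>i. if i = j then 1 else 0)"

definition is_ideal :: "('n,'m,'k::comm_ring_1) lpoly set \<Rightarrow> bool" where
  "is_ideal J \<longleftrightarrow> 0 \<in> J \<and> (\<forall>f\<in>J. \<forall>g\<in>J. f + g \<in> J) \<and> (\<forall>r. \<forall>f\<in>J. r * f \<in> J)"

definition ideal_gen :: "('n,'m,'k::comm_ring_1) lpoly set \<Rightarrow> ('n,'m,'k) lpoly set" where
  "ideal_gen S = \<Inter>{J. is_ideal J \<and> S \<subseteq> J}"

type_synonym ('n,'k) series = "('n \<Rightarrow> rat) \<Rightarrow> 'k"

definition supp :: "('n,'k::zero) series \<Rightarrow> ('n \<Rightarrow> rat) set" where
  "supp \<phi> = {a. \<phi> a \<noteq> 0}"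

definition wdot :: "('n::finite \<Rightarrow> real) \<Rightarrow> ('n \<Rightarrow> rat) \<Rightarrow> real" where
  "wdot \<omega> a = (\<Sum>i\<in>UNIV. \<omega> i * of_rat (a i))"

definition rat_cone :: "('n::finite \<Rightarrow> rat) set \<Rightarrow> ('n \<Rightarrow> real) set" where
  "rat_cone V = {v. \<exists>l. (\<forall>u\<in>V. l u \<ge> (0::real)) \<and> v = (\<lambda>i. \<Sum>u\<in>V. l u * of_rat (u i))}"

definition omega_positive :: "('n::finite \<Rightarrow> real) \<Rightarrow> ('n,'k::zero) series \<Rightarrow> bool" where
  "omega_positive \<omega> \<phi> \<longleftrightarrow>
     (\<exists>k::nat. k > 0 \<and> (\<forall>a\<in>supp \<phi>. \<forall>i. of_nat k * a i \<in> \<int>)) \<and>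
     (\<exists>\<gamma>::'n \<Rightarrow> rat. \<exists>V. finite V \<and>
        (\<forall>v\<in>rat_cone V. (\<Sum>i\<in>UNIV. v i * \<omega> i) \<ge> 0) \<and>
        (\<forall>a\<in>supp \<phi>. (\<lambda>i. of_rat (a i + \<gamma> i)) \<in> rat_cone V))"

definition ord_s :: "('n::finite \<Rightarrow> real) \<Rightarrow> ('n,'k::zero) series \<Rightarrow> ereal" where
  "ord_s \<omega> \<phi> = Inf ((\<lambda>a. ereal (wdot \<omega> a)) ` supp \<phi>)"

definition in_s :: "('n::finite \<Rightarrow> real) \<Rightarrow> ('n,'k::zero) series \<Rightarrow> ('n,'k) series" where
  "in_s \<omega> \<phi> = (\<lambda>a. if ereal (wdot \<omega> a) = ord_s \<omega> \<phi> then \<phi> a else 0)"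

(* coefficient at gamma of the product prod_j phi_j^{beta_j} *)
definition pow_prod_coeff :: "('m::finite \<Rightarrow> ('n,'k::comm_ring_1) series) \<Rightarrow> ('m \<Rightarrow> nat) \<Rightarrow> ('n \<Rightarrow> rat) \<Rightarrow> 'k" where
  "pow_prod_coeff \<phi> \<beta> \<gamma> =
     (\<Sum>e\<in>{e :: 'm \<Rightarrow> nat \<Rightarrow> ('n \<Rightarrow> rat).
             (\<forall>j l. \<beta> j \<le> l \<longrightarrow> e j l = 0) \<and> (\<forall>j l. l < \<beta> j \<longrightarrow> \<phi> j (e j l) \<noteq> 0) \<and>
             (\<Sum>j\<in>UNIV. \<Sum>l<\<beta> j. e j l) = \<gamma>}.
        \<Prod>j\<in>UNIV. \<Prod>l<\<beta> j. \<phi> j (e j l))"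

definition eval_series :: "('n,'m::finite,'k::comm_ring_1) lpoly \<Rightarrow> ('m \<Rightarrow> ('n,'k) series) \<Rightarrow> ('n,'k) series" where
  "eval_series f \<phi> = (\<lambda>\<gamma>. \<Sum>p\<in>Poly_Mapping.keys f. Poly_Mapping.lookup f p * pow_prod_coeff \<phi> (snd p) (\<gamma> - (\<lambda>i. of_int (fst p i))))"

definition omega_solution :: "('n::finite \<Rightarrow> real) \<Rightarrow> ('n,'m::finite,'k::comm_ring_1) lpoly set \<Rightarrow> ('m \<Rightarrow> ('n,'k) series) \<Rightarrow> bool" where
  "omega_solution \<omega> J \<phi> \<longleftrightarrow> (\<forall>j. omega_positive \<omega> (\<phi> j)) \<and> (\<forall>f\<in>J. eval_series f \<phi> = (\<lambda>_. 0))"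

definition poly_part :: "('n,'m,'k::comm_ring_1) lpoly set \<Rightarrow> ('n,'m,'k) lpoly set" where
  "poly_part I = {f\<in>I. \<forall>p\<in>Poly_Mapping.keys f. \<forall>i. fst p i \<ge> 0}"

definition eval_pt :: "('n::finite,'m::finite,'k::comm_ring_1) lpoly \<Rightarrow> ('n \<Rightarrow> 'k) \<Rightarrow> ('m \<Rightarrow> 'k) \<Rightarrow> 'k" where
  "eval_pt f a b = (\<Sum>p\<in>Poly_Mapping.keys f. Poly_Mapping.lookup f p * (\<Prod>i\<in>UNIV. a i ^ nat (fst p i)) * (\<Prod>j\<in>UNIV. b j ^ snd p j))"

definition zero_set :: "('n::finite,'m::finite,'k::comm_ring_1) lpoly set \<Rightarrow> (('n \<Rightarrow> 'k) \<times> ('m \<Rightarrow> 'k)) set" where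
  "zero_set J = {(a, b). \<forall>f\<in>J. eval_pt f a b = 0}"

definition x_polys :: "('n,'m,'k::comm_ring_1) lpoly set" where
  "x_polys = {g. \<forall>p\<in>Poly_Mapping.keys g. (\<forall>i. fst p i \<ge> 0) \<and> snd p = 0}"

definition admissible :: "('n::finite,'m::finite,'k::comm_ring_1) lpoly set \<Rightarrow> bool" where
  "admissible I \<longleftrightarrow>
    (let V = zero_set (poly_part I) in
      \<comment> \<open>dominant: no nonzero polynomial in x vanishes on the projection of V\<close>
      (\<forall>g\<in>x_polys. (\<forall>(a, b)\<in>V. eval_pt g a b = 0) \<longrightarrow> g = 0) \<and>
      \<comment> \<open>finite generic fibre: finite fibres outside a proper hypersurface\<close>
      (\<exists>h\<in>x_polys. (h::('n,'m,'k) lpoly) \<noteq> 0 \<and> (\<forall>a. eval_pt h a 0 \<noteq> 0 \<longrightarrow> finite {b. (a, b) \<in> V})))"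

definition Lam :: "('m \<Rightarrow> ereal) \<Rightarrow> 'm set" where
  "Lam \<eta> = {i. \<eta> i \<noteq> \<infinity>}"

definition wt :: "('n::finite \<Rightarrow> real) \<Rightarrow> ('m::finite \<Rightarrow> ereal) \<Rightarrow> ('n,'m) lexp \<Rightarrow> ereal" where
  "wt \<omega> \<eta> p = ereal (\<Sum>i\<in>UNIV. \<omega> i * of_int (fst p i)) + (\<Sum>j\<in>UNIV. \<eta> j * ereal (of_nat (snd p j)))"

definition ord_p :: "('n::finite \<Rightarrow> real) \<Rightarrow> ('m::finite \<Rightarrow> ereal) \<Rightarrow> ('n,'m,'k::zero) lpoly \<Rightarrow> ereal" where
  "ord_p \<omega> \<eta> f = Inf (wt \<omega> \<eta> ` Poly_Mapping.keys f)"

definition in_p :: "('n::finite \<Rightarrow> real) \<Rightarrow> ('m::finite \<Rightarrow> ereal) \<Rightarrow> ('n,'m,'k::zero) lpoly \<Rightarrow> ('n,'m,'k) lpoly" where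
  "in_p \<omega> \<eta> f = (if ord_p \<omega> \<eta> f = \<infinity> then 0
     else Abs_poly_mapping (\<lambda>p. if wt \<omega> \<eta> p = ord_p \<omega> \<eta> f then Poly_Mapping.lookup f p else 0))"

definition In_ideal :: "('n::finite \<Rightarrow> real) \<Rightarrow> ('m::finite \<Rightarrow> ereal) \<Rightarrow> ('n,'m,'k::comm_ring_1) lpoly set \<Rightarrow> ('n,'m,'k) lpoly set" where
  "In_ideal \<omega> \<eta> J = ideal_gen (in_p \<omega> \<eta> ` J \<union> yvar ` (- Lam \<eta>))"

definition in_tau :: "('n::finite \<Rightarrow> real) \<Rightarrow> ('m::finite \<Rightarrow> ereal) \<Rightarrow> ('n,'m,'k::comm_ring_1) lpoly set \<Rightarrow> bool" where
  "in_tau \<omega> \<eta> J \<longleftrightarrow> \<not> (\<exists>c a b. c \<noteq> 0 \<and> (\<forall>j. j \<notin> Lam \<eta> \<longrightarrow> b j = 0) \<and> mono c a b \<in> In_ideal \<omega> \<eta> J)"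

(* D = (eta, Gamma, c); Gamma entries in Q \<union> {\<infinity>}, None meaning \<infinity> *)
type_synonym ('n,'m,'k) wset = "('m \<Rightarrow> ereal) \<times> ('m \<Rightarrow> 'n \<Rightarrow> rat option) \<times> ('m \<Rightarrow> 'k)"

definition omega_set :: "('n::finite \<Rightarrow> real) \<Rightarrow> ('n,'m,'k::zero) wset \<Rightarrow> bool" where
  "omega_set \<omega> D \<longleftrightarrow> (case D of (\<eta>, \<Gamma>, c) \<Rightarrow>
     (\<forall>i. \<eta> i \<noteq> -\<infinity>) \<and>
     (\<forall>i\<in>Lam \<eta>. (\<forall>j. \<Gamma> i j \<noteq> None) \<and> ereal (wdot \<omega> (\<lambda>j. the (\<Gamma> i j))) = \<eta> i \<and> c i \<noteq> 0) \<and>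
     (\<forall>i. i \<notin> Lam \<eta> \<longrightarrow> (\<forall>j. \<Gamma> i j = None) \<and> c i = 0))"

definition eval_one :: "('n,'m::finite,'k::comm_ring_1) lpoly \<Rightarrow> ('m \<Rightarrow> 'k) \<Rightarrow> 'k" where
  "eval_one f c = (\<Sum>p\<in>Poly_Mapping.keys f. Poly_Mapping.lookup f p * (\<Prod>j\<in>UNIV. c j ^ snd p j))"

definition starting_set :: "('n::finite \<Rightarrow> real) \<Rightarrow> ('n,'m::finite,'k::comm_ring_1) lpoly set \<Rightarrow> ('n,'m,'k) wset \<Rightarrow> bool" where
  "starting_set \<omega> J D \<longleftrightarrow> (case D of (\<eta>, \<Gamma>, c) \<Rightarrow>
     omega_set \<omega> D \<and> in_tau \<omega> \<eta> J \<and> (\<forall>f\<in>In_ideal \<omega> \<eta> J. eval_one f c = 0))"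

definition dG :: "('m \<Rightarrow> 'n \<Rightarrow> rat option) \<Rightarrow> nat" where
  "dG \<Gamma> = (LEAST k::nat. k > 0 \<and> (\<forall>i j q. \<Gamma> i j = Some q \<longrightarrow> of_nat k * q \<in> \<int>))"

definition subst_D :: "('n,'m,'k) wset \<Rightarrow> ('n,'m::finite,'k::comm_ring_1) lpoly \<Rightarrow> ('n,'m,'k) lpoly" where
  "subst_D D f = (case D of (\<eta>, \<Gamma>, c) \<Rightarrow> let k = dG \<Gamma> in
     (\<Sum>p\<in>Poly_Mapping.keys f. mono (Poly_Mapping.lookup f p) (\<lambda>i. int k * fst p i) 0 *
        (\<Prod>j\<in>UNIV. (yvar j + (if \<Gamma> j = (\<lambda>_. None) then 0
              else mono (c j) (\<lambda>i. \<lfloor>of_nat k * the (\<Gamma> j i)\<rfloor>) 0)) ^ snd p j)))"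

definition ideal_D :: "('n,'m,'k) wset \<Rightarrow> ('n,'m::finite,'k::comm_ring_1) lpoly set \<Rightarrow> ('n,'m,'k) lpoly set" where
  "ideal_D D J = ideal_gen (subst_D D ` J)"

primrec ideal_seq :: "('n,'m::finite,'k::comm_ring_1) lpoly set \<Rightarrow> (nat \<Rightarrow> ('n,'m,'k) wset) \<Rightarrow> nat \<Rightarrow> ('n,'m,'k) lpoly set" where
  "ideal_seq I Ds 0 = I"
| "ideal_seq I Ds (Suc i) = ideal_D (Ds i) (ideal_seq I Ds i)"

definition omega_sequence :: "('n::finite \<Rightarrow> real) \<Rightarrow> ('n,'m::finite,'k::comm_ring_1) lpoly set \<Rightarrow> (nat \<Rightarrow> ('n,'m,'k) wset) \<Rightarrow> bool" where
  "omega_sequence \<omega> I Ds \<longleftrightarrow>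
     (\<forall>i. starting_set \<omega> (ideal_seq I Ds i) (Ds i)) \<and>
     (\<forall>i\<ge>1. \<forall>j\<in>Lam (fst (Ds i)).
        fst (Ds i) j > ereal (of_nat (dG (fst (snd (Ds (i - 1)))))) * fst (Ds (i - 1)) j)"

(* D(in_omega phi): componentwise, in_omega phi_j is a single term (or 0) *)
definition def_data :: "('n::finite \<Rightarrow> real) \<Rightarrow> ('m \<Rightarrow> ('n,'k::zero) series) \<Rightarrow> ('n,'m,'k) wset" where
  "def_data \<omega> \<phi> =
     (\<lambda>j. ord_s \<omega> (\<phi> j),
      \<lambda>j. if supp (in_s \<omega> (\<phi> j)) = {} then (\<lambda>_. None)
          else (\<lambda>i. Some ((THE a. a \<in> supp (in_s \<omega> (\<phi> j))) i)),
      \<lambda>j. if supp (in_s \<omega> (\<phi> j)) = {} then 0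
          else in_s \<omega> (\<phi> j) (THE a. a \<in> supp (in_s \<omega> (\<phi> j))))"

definition series_step :: "('n,'m,'k) wset \<Rightarrow> ('m \<Rightarrow> ('n,'k::comm_ring_1) series) \<Rightarrow> ('m \<Rightarrow> ('n,'k) series)" where
  "series_step D \<phi> = (case D of (\<eta>, \<Gamma>, c) \<Rightarrow> let k = dG \<Gamma> in
     (\<lambda>j \<gamma>. \<phi> j (\<lambda>i. \<gamma> i / of_nat k) -
        (if \<Gamma> j \<noteq> (\<lambda>_. None) \<and> \<gamma> = (\<lambda>i. of_nat k * the (\<Gamma> j i)) then c j else 0)))"

primrec phi_seq :: "('n::finite \<Rightarrow> real) \<Rightarrow> ('m \<Rightarrow> ('n,'k::comm_ring_1) series) \<Rightarrow> nat \<Rightarrow> ('m \<Rightarrow> ('n,'k) series)" where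
  "phi_seq \<omega> \<phi> 0 = \<phi>"
| "phi_seq \<omega> \<phi> (Suc i) = series_step (def_data \<omega> (phi_seq \<omega> \<phi> i)) (phi_seq \<omega> \<phi> i)"

definition seq :: "('n::finite \<Rightarrow> real) \<Rightarrow> ('m \<Rightarrow> ('n,'k::comm_ring_1) series) \<Rightarrow> nat \<Rightarrow> ('n,'m,'k) wset" where
  "seq \<omega> \<phi> i = def_data \<omega> (phi_seq \<omega> \<phi> i)"

end

theory Submission
  imports Defs "HOL-Library.FuncSet"
begin

text \<open>
  Series are only available coefficientwise, so \<open>g(x, \<psi>) = 0\<close> is replaced by an asymptotic
  condition: \<open>g\<close> \<^emph>\<open>vanishes at\<close> \<open>\<psi>\<close> if \<open>g\<close> evaluated at any Puiseux polynomial agreeing with \<open>\<psi>\<close>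
  below weight \<open>W\<close> has \<open>\<omega>\<close>-order at least \<open>W - O(1)\<close>. Every element of \<open>\<I>\<close> vanishes at an
  \<open>\<omega>\<close>-solution, the polynomials vanishing at \<open>\<psi>\<close> form an ideal, and the condition passes from
  \<open>(\<J>, \<psi>)\<close> to \<open>(\<J>\<^sub>D, \<psi>(x\<^sup>k) - \<M>\<^sub>D(x\<^sup>k))\<close>; so it holds along the whole sequence. Evaluating at a
  truncation far beyond \<open>ord\<^sub>\<omega>\<^sub>,\<^sub>\<eta> g\<close> shows that \<open>in\<^sub>\<omega>\<^sub>,\<^sub>\<eta> g\<close> vanishes at the leading monomials
  \<open>\<M>\<^sub>D\<close> of \<open>\<psi>\<close>, which gives both \<open>(\<omega>, \<eta>) \<in> \<tau>(\<J>)\<close> and that \<open>c\<close> is a common zero of the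
  initial ideal. \<open>\<omega>\<close>-positivity leaves each \<open>\<psi>\<^sub>j\<close> finitely many terms below any weight, and
  \<open>\<bbbQ>\<close>-linear independence of \<open>\<omega>\<close> makes its least-weight term a single monomial; each step
  removes that monomial, whence the order inequality.
\<close>

section \<open>Extending homomorphisms to monoid algebras\<close>

lemma poly_mapping_sum_single:
  "(f :: 'a \<Rightarrow>\<^sub>0 'b::comm_monoid_add) = (\<Sum>p\<in>Poly_Mapping.keys f. Poly_Mapping.single p (Poly_Mapping.lookup f p))"
proof (rule poly_mapping_eqI)
  fix k
  have "Poly_Mapping.lookup (\<Sum>p\<in>Poly_Mapping.keys f. Poly_Mapping.single p (Poly_Mapping.lookup f p)) k
     = (\<Sum>p\<in>Poly_Mapping.keys f. (if p = k then Poly_Mapping.lookup f p else 0))"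
    by (simp add: lookup_sum lookup_single when_def)
  also have "\<dots> = Poly_Mapping.lookup f k"
    by (simp add: in_keys_iff)
  finally show "Poly_Mapping.lookup f k = Poly_Mapping.lookup (\<Sum>p\<in>Poly_Mapping.keys f. Poly_Mapping.single p (Poly_Mapping.lookup f p)) k"
    by simp
qed

definition pm_lift :: "('b::zero \<Rightarrow> 'r) \<Rightarrow> ('a \<Rightarrow> 'r) \<Rightarrow> ('a \<Rightarrow>\<^sub>0 'b) \<Rightarrow> 'r::comm_ring_1" where
  "pm_lift h \<chi> f = (\<Sum>p\<in>Poly_Mapping.keys f. h (Poly_Mapping.lookup f p) * \<chi> p)"

locale pm_lift_hom =
  fixes h :: "'b::comm_ring_1 \<Rightarrow> 'r::comm_ring_1" and \<chi> :: "'a::comm_monoid_add \<Rightarrow> 'r"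
  assumes h_add: "h (x + y) = h x + h y" and h_mult: "h (x * y) = h x * h y" and h_one: "h 1 = 1"
    and \<chi>_add: "\<chi> (a + b) = \<chi> a * \<chi> b" and \<chi>_zero: "\<chi> 0 = 1"
begin

lemma h_zero: "h 0 = 0"
  using h_add[of 0 0] by simp

lemma pm_lift_superset:
  assumes "finite S" "Poly_Mapping.keys f \<subseteq> S"
  shows "pm_lift h \<chi> f = (\<Sum>p\<in>S. h (Poly_Mapping.lookup f p) * \<chi> p)"
  unfolding pm_lift_def
  by (rule sum.mono_neutral_left) (use assms in \<open>auto simp: in_keys_iff h_zero\<close>)

lemma pm_lift_add: "pm_lift h \<chi> (f + g) = pm_lift h \<chi> f + pm_lift h \<chi> g"
proof -
  let ?S = "Poly_Mapping.keys f \<union> Poly_Mapping.keys g"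
  have "pm_lift h \<chi> (f + g) = (\<Sum>p\<in>?S. h (Poly_Mapping.lookup (f + g) p) * \<chi> p)"
    by (rule pm_lift_superset) (auto simp: keys_add)
  also have "\<dots> = (\<Sum>p\<in>?S. h (Poly_Mapping.lookup f p) * \<chi> p) + (\<Sum>p\<in>?S. h (Poly_Mapping.lookup g p) * \<chi> p)"
    by (simp add: lookup_add h_add distrib_right sum.distrib)
  also have "\<dots> = pm_lift h \<chi> f + pm_lift h \<chi> g"
    by (subst (1 2) pm_lift_superset[where S = ?S]) auto
  finally show ?thesis .
qed

lemma pm_lift_zero: "pm_lift h \<chi> 0 = 0"
  by (simp add: pm_lift_def)

lemma pm_lift_single: "pm_lift h \<chi> (Poly_Mapping.single a c) = h c * \<chi> a"
  by (subst pm_lift_superset[where S = "{a}"]) (auto simp: h_zero)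

lemma pm_lift_sum: "pm_lift h \<chi> (\<Sum>i\<in>A. F i) = (\<Sum>i\<in>A. pm_lift h \<chi> (F i))"
  by (induction A rule: infinite_finite_induct) (auto simp: pm_lift_zero pm_lift_add)

lemma pm_lift_mult: "pm_lift h \<chi> (f * g) = pm_lift h \<chi> f * pm_lift h \<chi> g"
proof -
  have "f * g = (\<Sum>p\<in>Poly_Mapping.keys f. \<Sum>q\<in>Poly_Mapping.keys g.
       Poly_Mapping.single (p + q) (Poly_Mapping.lookup f p * Poly_Mapping.lookup g q))"
    by (subst (1) poly_mapping_sum_single[of f], subst (1) poly_mapping_sum_single[of g])
      (simp add: sum_product mult_single)
  then have "pm_lift h \<chi> (f * g) = (\<Sum>p\<in>Poly_Mapping.keys f. \<Sum>q\<in>Poly_Mapping.keys g.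
       h (Poly_Mapping.lookup f p) * \<chi> p * (h (Poly_Mapping.lookup g q) * \<chi> q))"
    by (simp add: pm_lift_sum pm_lift_single h_mult \<chi>_add mult_ac)
  also have "\<dots> = pm_lift h \<chi> f * pm_lift h \<chi> g"
    by (simp add: pm_lift_def sum_product)
  finally show ?thesis .
qed

lemma pm_lift_one: "pm_lift h \<chi> 1 = 1"
  using pm_lift_single[of 0 1] by (simp add: h_one \<chi>_zero)

lemma pm_lift_prod: "pm_lift h \<chi> (\<Prod>i\<in>A. F i) = (\<Prod>i\<in>A. pm_lift h \<chi> (F i))"
  by (induction A rule: infinite_finite_induct) (auto simp: pm_lift_one pm_lift_mult)

lemma pm_lift_power: "pm_lift h \<chi> (f ^ n) = pm_lift h \<chi> f ^ n"
  by (induction n) (auto simp: pm_lift_one pm_lift_mult)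

end

section \<open>Puiseux polynomials and their \<open>\<omega>\<close>-order\<close>

type_synonym ('n,'k) ppoly = "('n \<Rightarrow> rat) \<Rightarrow>\<^sub>0 'k"

lemma wdot_add: "wdot \<omega> (a + b) = wdot \<omega> a + wdot \<omega> b"
  by (simp add: wdot_def of_rat_add distrib_left sum.distrib)

lemma wdot_zero [simp]: "wdot \<omega> 0 = 0"
  by (simp add: wdot_def)

lemma wdot_diff: "wdot \<omega> (a - b) = wdot \<omega> a - wdot \<omega> b"
  by (simp add: wdot_def of_rat_diff right_diff_distrib sum_subtractf)

lemma wdot_sum: "wdot \<omega> (\<Sum>i\<in>A. F i) = (\<Sum>i\<in>A. wdot \<omega> (F i))"
proof (induction A rule: infinite_finite_induct)
  case (insert x B)
  then show ?case using wdot_add[of \<omega> "F x" "sum F B"] by (metis sum.insert)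
qed (simp_all add: wdot_def)

lemma wdot_scale: "wdot \<omega> (\<lambda>i. q * a i) = of_rat q * wdot \<omega> a"
  by (simp add: wdot_def of_rat_mult sum_distrib_left mult_ac)

lemma wdot_divide: "wdot \<omega> (\<lambda>i. \<gamma> i / of_nat k) = wdot \<omega> \<gamma> / of_nat k"
  using wdot_scale[of \<omega> "1 / of_nat k" \<gamma>] by (simp add: field_simps of_rat_divide)

lemma wdot_of_nat_mult: "wdot \<omega> (\<lambda>i. of_nat k * \<gamma> i) = of_nat k * wdot \<omega> \<gamma>"
  using wdot_scale[of \<omega> "of_nat k" \<gamma>] by simp

lemma wdot_inj:
  assumes "Q_lin_indep \<omega>" and "wdot \<omega> a = wdot \<omega> b"
  shows "a = b"
proof -
  have "(\<Sum>i\<in>UNIV. of_rat ((a - b) i) * \<omega> i) = wdot \<omega> a - wdot \<omega> b"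
    by (simp add: wdot_def of_rat_diff right_diff_distrib sum_subtractf mult.commute)
  then have "(\<Sum>i\<in>UNIV. of_rat ((a - b) i) * \<omega> i) = 0"
    using assms(2) by simp
  then have "\<forall>i. (a - b) i = 0"
    using assms(1) unfolding Q_lin_indep_def by blast
  then show ?thesis by (simp add: fun_eq_iff)
qed

definition order_ge :: "('n::finite \<Rightarrow> real) \<Rightarrow> ('n,'k::zero) ppoly \<Rightarrow> real \<Rightarrow> bool" where
  "order_ge \<omega> P b \<longleftrightarrow> (\<forall>\<gamma>\<in>Poly_Mapping.keys P. b \<le> wdot \<omega> \<gamma>)"

definition order_gt :: "('n::finite \<Rightarrow> real) \<Rightarrow> ('n,'k::zero) ppoly \<Rightarrow> real \<Rightarrow> bool" where
  "order_gt \<omega> P b \<longleftrightarrow> (\<forall>\<gamma>\<in>Poly_Mapping.keys P. b < wdot \<omega> \<gamma>)"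

definition degree_le :: "('n::finite \<Rightarrow> real) \<Rightarrow> ('n,'k::zero) ppoly \<Rightarrow> real \<Rightarrow> bool" where
  "degree_le \<omega> P b \<longleftrightarrow> (\<forall>\<gamma>\<in>Poly_Mapping.keys P. wdot \<omega> \<gamma> \<le> b)"

lemma order_ge_zero [simp]: "order_ge \<omega> 0 b" by (simp add: order_ge_def)
lemma order_gt_zero [simp]: "order_gt \<omega> 0 b" by (simp add: order_gt_def)
lemma degree_le_zero [simp]: "degree_le \<omega> 0 b" by (simp add: degree_le_def)

lemma order_ge_single: "b \<le> wdot \<omega> \<gamma> \<Longrightarrow> order_ge \<omega> (Poly_Mapping.single \<gamma> c) b"
  by (simp add: order_ge_def)
lemma degree_le_single: "wdot \<omega> \<gamma> \<le> b \<Longrightarrow> degree_le \<omega> (Poly_Mapping.single \<gamma> c) b"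
  by (simp add: degree_le_def)

lemma order_ge_mono: "order_ge \<omega> P b \<Longrightarrow> b' \<le> b \<Longrightarrow> order_ge \<omega> P b'"
  by (force simp: order_ge_def)
lemma order_ge_imp_gt: "order_ge \<omega> P b \<Longrightarrow> b' < b \<Longrightarrow> order_gt \<omega> P b'"
  by (force simp: order_ge_def order_gt_def)

lemma order_gt_degree_le_imp_zero: "order_gt \<omega> P b \<Longrightarrow> degree_le \<omega> P b \<Longrightarrow> P = 0"
  by (metis keys_eq_empty degree_le_def ex_in_conv not_le order_gt_def)

lemma order_ge_add: "order_ge \<omega> P b \<Longrightarrow> order_ge \<omega> Q b \<Longrightarrow> order_ge \<omega> (P + Q) b"
  using keys_add[of P Q] by (auto simp: order_ge_def)
lemma order_gt_add: "order_gt \<omega> P b \<Longrightarrow> order_gt \<omega> Q b \<Longrightarrow> order_gt \<omega> (P + Q) b"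
  using keys_add[of P Q] by (auto simp: order_gt_def)
lemma degree_le_add: "degree_le \<omega> P b \<Longrightarrow> degree_le \<omega> Q b \<Longrightarrow> degree_le \<omega> (P + Q) b"
  using keys_add[of P Q] by (auto simp: degree_le_def)
lemma order_gt_diff:
  "order_gt \<omega> P b \<Longrightarrow> order_gt \<omega> Q b \<Longrightarrow> order_gt \<omega> (P - (Q :: ('n::finite,'k::ab_group_add) ppoly)) b"
  using keys_diff[of P Q] by (auto simp: order_gt_def)

lemma order_ge_mult:
  "order_ge \<omega> P a \<Longrightarrow> order_ge \<omega> Q b \<Longrightarrow> order_ge \<omega> (P * (Q :: ('n::finite,'k::comm_semiring_0) ppoly)) (a + b)"
  using keys_mult[of P Q] by (force simp: order_ge_def wdot_add intro: add_mono)
lemma order_gt_mult_left: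
  "order_gt \<omega> P a \<Longrightarrow> order_ge \<omega> Q b \<Longrightarrow> order_gt \<omega> (P * (Q :: ('n::finite,'k::comm_semiring_0) ppoly)) (a + b)"
  using keys_mult[of P Q] by (force simp: order_ge_def order_gt_def wdot_add intro: add_less_le_mono)
lemma order_gt_mult_right:
  "order_ge \<omega> P a \<Longrightarrow> order_gt \<omega> Q b \<Longrightarrow> order_gt \<omega> (P * (Q :: ('n::finite,'k::comm_semiring_0) ppoly)) (a + b)"
  using keys_mult[of P Q] by (force simp: order_ge_def order_gt_def wdot_add intro: add_le_less_mono)
lemma degree_le_mult:
  "degree_le \<omega> P a \<Longrightarrow> degree_le \<omega> Q b \<Longrightarrow> degree_le \<omega> (P * (Q :: ('n::finite,'k::comm_semiring_0) ppoly)) (a + b)"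
  using keys_mult[of P Q] by (force simp: degree_le_def wdot_add intro: add_mono)

lemma order_ge_one: "order_ge \<omega> (1 :: ('n::finite,'k::comm_semiring_1) ppoly) 0"
  by (simp add: order_ge_def)
lemma degree_le_one: "degree_le \<omega> (1 :: ('n::finite,'k::comm_semiring_1) ppoly) 0"
  by (simp add: degree_le_def)

lemma order_ge_sum: "(\<And>i. i \<in> A \<Longrightarrow> order_ge \<omega> (F i) b) \<Longrightarrow> order_ge \<omega> (sum F A) b"
  by (induction A rule: infinite_finite_induct) (auto intro: order_ge_add)
lemma order_gt_sum: "(\<And>i. i \<in> A \<Longrightarrow> order_gt \<omega> (F i) b) \<Longrightarrow> order_gt \<omega> (sum F A) b"
  by (induction A rule: infinite_finite_induct) (auto intro: order_gt_add)
lemma degree_le_sum: "(\<And>i. i \<in> A \<Longrightarrow> degree_le \<omega> (F i) b) \<Longrightarrow> degree_le \<omega> (sum F A) b"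
  by (induction A rule: infinite_finite_induct) (auto intro: degree_le_add)

lemma order_ge_prod:
  "(\<And>i. i \<in> A \<Longrightarrow> order_ge \<omega> (F i) (b i)) \<Longrightarrow>
   order_ge \<omega> (prod F A :: ('n::finite,'k::comm_semiring_1) ppoly) (sum b A)"
  by (induction A rule: infinite_finite_induct) (auto intro: order_ge_mult simp: order_ge_one)
lemma degree_le_prod:
  "(\<And>i. i \<in> A \<Longrightarrow> degree_le \<omega> (F i) (b i)) \<Longrightarrow>
   degree_le \<omega> (prod F A :: ('n::finite,'k::comm_semiring_1) ppoly) (sum b A)"
  by (induction A rule: infinite_finite_induct) (auto intro: degree_le_mult simp: degree_le_one)
lemma order_ge_power:
  "order_ge \<omega> P b \<Longrightarrow> order_ge \<omega> (P ^ n :: ('n::finite,'k::comm_semiring_1) ppoly) (of_nat n * b)"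
  by (induction n) (auto simp: order_ge_one distrib_right dest: order_ge_mult)
lemma degree_le_power:
  "degree_le \<omega> P b \<Longrightarrow> degree_le \<omega> (P ^ n :: ('n::finite,'k::comm_semiring_1) ppoly) (of_nat n * b)"
  by (induction n) (auto simp: degree_le_one distrib_right dest: degree_le_mult)

definition same_initial :: "('n::finite \<Rightarrow> real) \<Rightarrow> ('n,'k::comm_ring_1) ppoly \<Rightarrow> ('n,'k) ppoly \<Rightarrow> real \<Rightarrow> bool" where
  "same_initial \<omega> P Q b \<longleftrightarrow> order_ge \<omega> P b \<and> order_ge \<omega> Q b \<and> order_gt \<omega> (P - Q) b"

lemma same_initial_refl: "order_ge \<omega> P b \<Longrightarrow> same_initial \<omega> P P b"
  by (simp add: same_initial_def)

lemma same_initial_mult: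
  assumes A: "same_initial \<omega> a a' s" and B: "same_initial \<omega> b b' t"
  shows "same_initial \<omega> (a * b) (a' * b') (s + t)"
proof -
  have e: "a * b - a' * b' = (a - a') * b + a' * (b - b')" by (simp add: algebra_simps)
  from A B have "order_gt \<omega> ((a - a') * b) (s + t)" "order_gt \<omega> (a' * (b - b')) (s + t)"
    unfolding same_initial_def by (auto intro: order_gt_mult_left order_gt_mult_right)
  then show ?thesis using A B unfolding same_initial_def e
    by (auto intro: order_ge_mult order_gt_add)
qed

lemma same_initial_prod:
  "(\<And>i. i \<in> A \<Longrightarrow> same_initial \<omega> (F i) (G i) (b i)) \<Longrightarrow> same_initial \<omega> (prod F A) (prod G A) (sum b A)"
  by (induction A rule: infinite_finite_induct) (auto intro: same_initial_mult same_initial_refl order_ge_one)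

lemma same_initial_power: "same_initial \<omega> P Q b \<Longrightarrow> same_initial \<omega> (P ^ n) (Q ^ n) (of_nat n * b)"
  by (induction n) (auto simp: same_initial_refl order_ge_one distrib_right dest: same_initial_mult)

lemma lookup_single_mult:
  "Poly_Mapping.lookup (Poly_Mapping.single a c * P) \<gamma> = c * Poly_Mapping.lookup P (\<gamma> - (a::'a::ab_group_add))"
proof -
  have "Poly_Mapping.lookup (Poly_Mapping.single a c * P) \<gamma> =
      (\<Sum>l. (c * (\<Sum>q. Poly_Mapping.lookup P q when \<gamma> = l + q)) when a = l)"
    by (simp add: lookup_mult lookup_single when_mult)
  also have "\<dots> = c * (\<Sum>q. Poly_Mapping.lookup P q when \<gamma> = a + q)"
    by simp
  also have "(\<Sum>q. Poly_Mapping.lookup P q when \<gamma> = a + q) = Poly_Mapping.lookup P (\<gamma> - a)"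
  proof -
    have "(\<lambda>q. \<gamma> = a + q) = (\<lambda>q. q = \<gamma> - a)"
      by (auto simp: fun_eq_iff algebra_simps)
    then show ?thesis by (metis Sum_any_when_equal)
  qed
  finally show ?thesis .
qed

lemma lookup_mult_keys:
  fixes B :: "'a::ab_group_add \<Rightarrow>\<^sub>0 'b::comm_ring_1"
  shows "Poly_Mapping.lookup (A * B) \<delta> =
   (\<Sum>a\<in>Poly_Mapping.keys A. Poly_Mapping.lookup A a * Poly_Mapping.lookup B (\<delta> - a))"
proof -
  have "A * B = (\<Sum>a\<in>Poly_Mapping.keys A. Poly_Mapping.single a (Poly_Mapping.lookup A a) * B)"
    by (subst (1) poly_mapping_sum_single[of A]) (simp add: sum_distrib_right)
  then show ?thesis by (simp add: lookup_sum lookup_single_mult)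
qed

definition factorizations ::
  "'t set \<Rightarrow> ('t \<Rightarrow> ('a::ab_group_add \<Rightarrow>\<^sub>0 'b::comm_ring_1)) \<Rightarrow> 'a \<Rightarrow> ('t \<Rightarrow> 'a) set" where
  "factorizations T F \<delta> = {e. (\<forall>t. t \<notin> T \<longrightarrow> e t = 0) \<and>
     (\<forall>t\<in>T. Poly_Mapping.lookup (F t) (e t) \<noteq> 0) \<and> (\<Sum>t\<in>T. e t) = \<delta>}"

lemma finite_factorizations:
  assumes "finite T" shows "finite (factorizations T F \<delta>)"
proof -
  have "factorizations T F \<delta> \<subseteq> (\<lambda>e t. if t \<in> T then e t else 0) ` (Pi\<^sub>E T (\<lambda>t. Poly_Mapping.keys (F t)))"
  proof
    fix e assume e: "e \<in> factorizations T F \<delta>"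
    have "e = (\<lambda>t. if t \<in> T then restrict e T t else 0)"
      using e by (auto simp: factorizations_def fun_eq_iff)
    moreover have "restrict e T \<in> Pi\<^sub>E T (\<lambda>t. Poly_Mapping.keys (F t))"
      using e by (auto simp: factorizations_def in_keys_iff)
    ultimately show "e \<in> (\<lambda>e t. if t \<in> T then e t else 0) ` (Pi\<^sub>E T (\<lambda>t. Poly_Mapping.keys (F t)))"
      by blast
  qed
  moreover have "finite (Pi\<^sub>E T (\<lambda>t. Poly_Mapping.keys (F t)))"
    using assms by (intro finite_PiE) auto
  ultimately show ?thesis by (meson finite_imageI finite_subset)
qed

lemma lookup_prod_factorizations:
  fixes F :: "'t \<Rightarrow> ('a::ab_group_add \<Rightarrow>\<^sub>0 'b::comm_ring_1)"
  assumes "finite T"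
  shows "Poly_Mapping.lookup (\<Prod>t\<in>T. F t) \<delta> =
    (\<Sum>e\<in>factorizations T F \<delta>. \<Prod>t\<in>T. Poly_Mapping.lookup (F t) (e t))"
  using assms
proof (induction T arbitrary: \<delta> rule: finite_induct)
  case empty
  have "factorizations {} F \<delta> = (if \<delta> = 0 then {\<lambda>_. 0} else {})"
    by (auto simp: factorizations_def fun_eq_iff)
  then show ?case by (simp add: lookup_one)
next
  case (insert s T)
  let ?S = "Sigma (Poly_Mapping.keys (F s)) (\<lambda>a. factorizations T F (\<delta> - a))"
  have "Poly_Mapping.lookup (\<Prod>t\<in>insert s T. F t) \<delta> =
      (\<Sum>a\<in>Poly_Mapping.keys (F s). Poly_Mapping.lookup (F s) a * Poly_Mapping.lookup (\<Prod>t\<in>T. F t) (\<delta> - a))"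
    using insert by (simp add: lookup_mult_keys)
  also have "\<dots> = (\<Sum>(a, e)\<in>?S. Poly_Mapping.lookup (F s) a * (\<Prod>t\<in>T. Poly_Mapping.lookup (F t) (e t)))"
    by (simp add: insert.IH sum_distrib_left sum.Sigma finite_factorizations insert.hyps)
  also have "\<dots> = (\<Sum>e\<in>factorizations (insert s T) F \<delta>. \<Prod>t\<in>insert s T. Poly_Mapping.lookup (F t) (e t))"
  proof (rule sum.reindex_bij_witness[where j = "\<lambda>(a, e). e(s := a)" and i = "\<lambda>e. (e s, e(s := 0))"])
    fix x assume x: "x \<in> ?S"
    obtain a e where xe: "x = (a, e)" by (cases x)
    have es: "e s = 0" using x xe insert.hyps by (auto simp: factorizations_def)
    show "(\<lambda>e. (e s, e(s := 0))) ((\<lambda>(a, e). e(s := a)) x) = x"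
      using xe es by (auto simp: fun_eq_iff)
    have "(\<Sum>t\<in>T. (e(s := a)) t) = (\<Sum>t\<in>T. e t)"
      using insert.hyps by (intro sum.cong) auto
    then show "(\<lambda>(a, e). e(s := a)) x \<in> factorizations (insert s T) F \<delta>"
      using x xe insert.hyps by (auto simp: factorizations_def in_keys_iff)
    have "(\<Prod>t\<in>T. Poly_Mapping.lookup (F t) ((e(s := a)) t)) = (\<Prod>t\<in>T. Poly_Mapping.lookup (F t) (e t))"
      using insert.hyps by (intro prod.cong) auto
    then show "(\<Prod>t\<in>insert s T. Poly_Mapping.lookup (F t) (((\<lambda>(a, e). e(s := a)) x) t)) =
          (case x of (a, e) \<Rightarrow> Poly_Mapping.lookup (F s) a * (\<Prod>t\<in>T. Poly_Mapping.lookup (F t) (e t)))"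
      using xe insert.hyps by simp
  next
    fix y assume y: "y \<in> factorizations (insert s T) F \<delta>"
    show "(\<lambda>(a, e). e(s := a)) ((\<lambda>e. (e s, e(s := 0))) y) = y" by auto
    have "(\<Sum>t\<in>T. (y(s := 0)) t) = (\<Sum>t\<in>T. y t)"
      using insert.hyps by (intro sum.cong) auto
    moreover have "(\<Sum>t\<in>T. y t) = \<delta> - y s"
      using y insert.hyps by (auto simp: factorizations_def algebra_simps)
    ultimately show "(\<lambda>e. (e s, e(s := 0))) y \<in> ?S"
      using y insert.hyps by (auto simp: factorizations_def in_keys_iff)
  qed
  finally show ?case .
qed

section \<open>Evaluating Laurent polynomials at Puiseux polynomials\<close>

definition xmono :: "('n \<Rightarrow> int) \<Rightarrow> ('n,'k::comm_ring_1) ppoly" where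
  "xmono a = Poly_Mapping.single (\<lambda>i. of_int (a i)) 1"

definition peval_term :: "('m::finite \<Rightarrow> ('n,'k::comm_ring_1) ppoly) \<Rightarrow> ('n,'m) lexp \<Rightarrow> ('n,'k) ppoly" where
  "peval_term u p = xmono (fst p) * (\<Prod>j\<in>UNIV. u j ^ snd p j)"

definition peval :: "('m::finite \<Rightarrow> ('n,'k::comm_ring_1) ppoly) \<Rightarrow> ('n,'m,'k) lpoly \<Rightarrow> ('n,'k) ppoly" where
  "peval u f = pm_lift (Poly_Mapping.single 0) (peval_term u) f"

lemma xmono_add: "xmono (a + b) = xmono a * (xmono b :: ('n,'k::comm_ring_1) ppoly)"
  by (simp add: xmono_def mult_single plus_fun_def)

lemma xmono_zero: "xmono 0 = 1"
proof -
  have "(\<lambda>i. of_int ((0 :: 'a \<Rightarrow> int) i) :: rat) = 0" by (simp add: fun_eq_iff)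
  then show ?thesis by (simp add: xmono_def)
qed

lemma peval_term_add: "peval_term u (p + q) = peval_term u p * peval_term u q"
  by (simp add: peval_term_def xmono_add power_add prod.distrib mult_ac)

lemma peval_term_zero: "peval_term u 0 = 1"
  by (simp add: peval_term_def xmono_zero)

interpretation peval: pm_lift_hom "Poly_Mapping.single 0" "peval_term u"
  by unfold_locales (auto simp: single_add mult_single peval_term_add peval_term_zero)

lemma peval_add: "peval u (f + g) = peval u f + peval u g" by (simp add: peval_def peval.pm_lift_add)
lemma peval_mult: "peval u (f * g) = peval u f * peval u g" by (simp add: peval_def peval.pm_lift_mult)
lemma peval_zero [simp]: "peval u 0 = 0" by (simp add: peval_def peval.pm_lift_zero)
lemma peval_sum: "peval u (sum F A) = (\<Sum>i\<in>A. peval u (F i))" by (simp add: peval_def peval.pm_lift_sum)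
lemma peval_prod: "peval u (prod F A) = (\<Prod>i\<in>A. peval u (F i))" by (simp add: peval_def peval.pm_lift_prod)
lemma peval_power: "peval u (f ^ n) = peval u f ^ n" by (simp add: peval_def peval.pm_lift_power)
lemma peval_mono: "peval u (mono c a b) = Poly_Mapping.single 0 c * peval_term u (a, b)"
  by (simp add: peval_def mono_def peval.pm_lift_single)

lemma peval_yvar: "peval u (yvar j) = u j"
proof -
  have "(\<Prod>i\<in>UNIV. u i ^ (if i = j then 1 else 0)) = (\<Prod>i\<in>UNIV. if i = j then u i else 1)"
    by (rule prod.cong) auto
  then show ?thesis by (simp add: yvar_def peval_mono peval_term_def xmono_zero)
qed

lemma peval_eq_sum:
  "peval u f = (\<Sum>p\<in>Poly_Mapping.keys f. Poly_Mapping.single 0 (Poly_Mapping.lookup f p) * peval_term u p)"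
  by (simp add: peval_def pm_lift_def)

lemma peval_ideal: "is_ideal {f. peval u f = 0}"
  unfolding is_ideal_def by (auto simp: peval_add peval_mult)

lemma finite_lower_bound: "finite S \<Longrightarrow> \<exists>c::real. \<forall>x\<in>S. c \<le> F x"
  by (rule exI[of _ "Min (insert 0 (F ` S))"]) auto

lemma order_ge_peval_term:
  assumes "\<And>j. order_ge \<omega> (u j) \<mu>"
  shows "order_ge \<omega> (peval_term u p) (wdot \<omega> (\<lambda>i. of_int (fst p i)) + (\<Sum>j\<in>UNIV. of_nat (snd p j) * \<mu>))"
  unfolding peval_term_def xmono_def
  by (intro order_ge_mult order_ge_single[OF order_refl] order_ge_prod order_ge_power assms)

lemma order_ge_const_mult:
  "order_ge \<omega> (P :: ('n::finite,'k::comm_ring_1) ppoly) b \<Longrightarrow> order_ge \<omega> (Poly_Mapping.single 0 c * P) b"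
  using order_ge_mult[of \<omega> "Poly_Mapping.single 0 c" 0 P b] by (simp add: order_ge_single)
lemma order_gt_const_mult:
  "order_gt \<omega> (P :: ('n::finite,'k::comm_ring_1) ppoly) b \<Longrightarrow> order_gt \<omega> (Poly_Mapping.single 0 c * P) b"
  using order_gt_mult_right[of \<omega> "Poly_Mapping.single 0 c" 0 P b] by (simp add: order_ge_single)
lemma degree_le_const_mult:
  "degree_le \<omega> (P :: ('n::finite,'k::comm_ring_1) ppoly) b \<Longrightarrow> degree_le \<omega> (Poly_Mapping.single 0 c * P) b"
  using degree_le_mult[of \<omega> "Poly_Mapping.single 0 c" 0 P b] by (simp add: degree_le_single)

lemma order_ge_peval_uniform:
  fixes f :: "('n::finite,'m::finite,'k::comm_ring_1) lpoly"
  shows "\<exists>c. \<forall>u. (\<forall>j. order_ge \<omega> (u j) \<mu>) \<longrightarrow> order_ge \<omega> (peval u f) c"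
proof -
  obtain c where c: "\<forall>p\<in>Poly_Mapping.keys f.
      c \<le> wdot \<omega> (\<lambda>i. of_int (fst p i)) + (\<Sum>j\<in>UNIV. of_nat (snd p j) * \<mu>)"
    using finite_lower_bound[of "Poly_Mapping.keys f"
            "\<lambda>p. wdot \<omega> (\<lambda>i. of_int (fst p i)) + (\<Sum>j\<in>UNIV. of_nat (snd p j) * \<mu>)"] by auto
  have "order_ge \<omega> (peval u f) c" if "\<forall>j. order_ge \<omega> (u j) \<mu>" for u
    unfolding peval_eq_sum
  proof (rule order_ge_sum, rule order_ge_const_mult)
    fix p assume p: "p \<in> Poly_Mapping.keys f"
    have "order_ge \<omega> (peval_term u p)
        (wdot \<omega> (\<lambda>i. of_int (fst p i)) + (\<Sum>j\<in>UNIV. of_nat (snd p j) * \<mu>))"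
      using that by (intro order_ge_peval_term) blast
    then show "order_ge \<omega> (peval_term u p) c"
      by (rule order_ge_mono) (use c p in blast)
  qed
  then show ?thesis by blast
qed

lemma same_initial_peval_term:
  assumes "\<And>j. same_initial \<omega> (u j) (m j) (e j)"
  shows "same_initial \<omega> (peval_term u p) (peval_term m p)
           (wdot \<omega> (\<lambda>i. of_int (fst p i)) + (\<Sum>j\<in>UNIV. of_nat (snd p j) * e j))"
proof -
  have "same_initial \<omega> (\<Prod>j\<in>UNIV. u j ^ snd p j) (\<Prod>j\<in>UNIV. m j ^ snd p j)
      (\<Sum>j\<in>UNIV. of_nat (snd p j) * e j)"
    by (rule same_initial_prod, rule same_initial_power, rule assms)
  then show ?thesis
    unfolding peval_term_def xmono_def
    by (rule same_initial_mult[OF same_initial_refl[OF order_ge_single[OF order_refl]]])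
qed

lemma degree_le_peval_term:
  assumes "\<And>j. degree_le \<omega> (m j) (e j)"
  shows "degree_le \<omega> (peval_term m p) (wdot \<omega> (\<lambda>i. of_int (fst p i)) + (\<Sum>j\<in>UNIV. of_nat (snd p j) * e j))"
proof -
  have "degree_le \<omega> (\<Prod>j\<in>UNIV. m j ^ snd p j) (\<Sum>j\<in>UNIV. of_nat (snd p j) * e j)"
    by (rule degree_le_prod, rule degree_le_power, rule assms)
  then show ?thesis
    unfolding peval_term_def xmono_def
    by (rule degree_le_mult[OF degree_le_single[OF order_refl]])
qed

text \<open>The slots \<open>(j, l)\<close>, \<open>l < \<beta> j\<close>, index the factors of \<open>\<Prod>\<^sub>j u\<^sub>j\<^bsup>\<beta> j\<^esup>\<close> as in \<open>pow_prod_coeff\<close>.\<close>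

definition power_slots :: "('m::finite \<Rightarrow> nat) \<Rightarrow> ('m \<times> nat) set" where
  "power_slots \<beta> = Sigma UNIV (\<lambda>j. {..<\<beta> j})"

lemma finite_power_slots [simp]: "finite (power_slots \<beta>)"
  by (simp add: power_slots_def)

lemma mem_power_slots: "t \<in> power_slots \<beta> \<longleftrightarrow> snd t < \<beta> (fst t)"
  by (cases t) (simp add: power_slots_def)

lemma sum_power_slots: "(\<Sum>j\<in>UNIV. \<Sum>l<\<beta> j. g j l) = (\<Sum>t\<in>power_slots \<beta>. g (fst t) (snd t))"
  unfolding power_slots_def by (subst sum.Sigma) (auto simp: case_prod_beta)

lemma prod_power_slots: "(\<Prod>j\<in>UNIV. \<Prod>l<\<beta> j. g j l) = (\<Prod>t\<in>power_slots \<beta>. g (fst t) (snd t))"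
  unfolding power_slots_def by (subst prod.Sigma) (auto simp: case_prod_beta)

definition slot_factorizations ::
  "('m::finite \<Rightarrow> 'a \<Rightarrow> 'b::zero) \<Rightarrow> ('m \<Rightarrow> nat) \<Rightarrow> 'a::comm_monoid_add \<Rightarrow> ('m \<Rightarrow> nat \<Rightarrow> 'a) set" where
  "slot_factorizations G \<beta> \<delta> = {e. (\<forall>j l. \<beta> j \<le> l \<longrightarrow> e j l = 0) \<and> (\<forall>j l. l < \<beta> j \<longrightarrow> G j (e j l) \<noteq> 0) \<and>
        (\<Sum>j\<in>UNIV. \<Sum>l<\<beta> j. e j l) = \<delta>}"

lemma pow_prod_coeff_eq:
  "pow_prod_coeff \<psi> \<beta> \<delta> = (\<Sum>e\<in>slot_factorizations \<psi> \<beta> \<delta>. \<Prod>j\<in>UNIV. \<Prod>l<\<beta> j. \<psi> j (e j l))"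
  by (simp add: pow_prod_coeff_def slot_factorizations_def)

lemma lookup_prod_power:
  fixes u :: "'m::finite \<Rightarrow> ('a::ab_group_add \<Rightarrow>\<^sub>0 'b::comm_ring_1)"
  shows "Poly_Mapping.lookup (\<Prod>j\<in>UNIV. u j ^ \<beta> j) \<delta> =
     (\<Sum>e\<in>slot_factorizations (\<lambda>j. Poly_Mapping.lookup (u j)) \<beta> \<delta>.
        \<Prod>j\<in>UNIV. \<Prod>l<\<beta> j. Poly_Mapping.lookup (u j) (e j l))"
proof -
  have "(\<Prod>j\<in>UNIV. u j ^ \<beta> j) = (\<Prod>t\<in>power_slots \<beta>. u (fst t))"
    using prod_power_slots[of "\<lambda>j l. u j" \<beta>] by simp
  then have "Poly_Mapping.lookup (\<Prod>j\<in>UNIV. u j ^ \<beta> j) \<delta> =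
      (\<Sum>e\<in>factorizations (power_slots \<beta>) (\<lambda>t. u (fst t)) \<delta>.
         \<Prod>t\<in>power_slots \<beta>. Poly_Mapping.lookup (u (fst t)) (e t))"
    by (simp add: lookup_prod_factorizations)
  also have "\<dots> = (\<Sum>e\<in>slot_factorizations (\<lambda>j. Poly_Mapping.lookup (u j)) \<beta> \<delta>.
      \<Prod>j\<in>UNIV. \<Prod>l<\<beta> j. Poly_Mapping.lookup (u j) (e j l))"
  proof (rule sum.reindex_bij_witness[where j = "\<lambda>e j l. e (j, l)" and i = "\<lambda>e t. e (fst t) (snd t)"])
    fix e assume e: "e \<in> factorizations (power_slots \<beta>) (\<lambda>t. u (fst t)) \<delta>"
    show "(\<lambda>t. (\<lambda>j l. e (j, l)) (fst t) (snd t)) = e" by simp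
    have "Poly_Mapping.lookup (u j) (e (j, l)) \<noteq> 0" if "l < \<beta> j" for j l
    proof -
      have "(j, l) \<in> power_slots \<beta>" using that by (simp add: mem_power_slots)
      then show ?thesis using e by (auto simp: factorizations_def)
    qed
    moreover have "e (j, l) = 0" if "\<beta> j \<le> l" for j l
      using e that by (auto simp: factorizations_def mem_power_slots)
    moreover have "(\<Sum>j\<in>UNIV. \<Sum>l<\<beta> j. e (j, l)) = \<delta>"
      using e by (simp add: factorizations_def sum_power_slots[of "\<lambda>j l. e (j, l)"])
    ultimately show "(\<lambda>j l. e (j, l)) \<in> slot_factorizations (\<lambda>j. Poly_Mapping.lookup (u j)) \<beta> \<delta>"
      by (auto simp: slot_factorizations_def)
    show "(\<Prod>j\<in>UNIV. \<Prod>l<\<beta> j. Poly_Mapping.lookup (u j) ((\<lambda>j l. e (j, l)) j l)) =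
       (\<Prod>t\<in>power_slots \<beta>. Poly_Mapping.lookup (u (fst t)) (e t))"
      by (simp add: prod_power_slots[of "\<lambda>j l. Poly_Mapping.lookup (u j) (e (j, l))"])
  next
    fix e assume e: "e \<in> slot_factorizations (\<lambda>j. Poly_Mapping.lookup (u j)) \<beta> \<delta>"
    show "(\<lambda>j l. (\<lambda>t. e (fst t) (snd t)) (j, l)) = e" by simp
    show "(\<lambda>t. e (fst t) (snd t)) \<in> factorizations (power_slots \<beta>) (\<lambda>t. u (fst t)) \<delta>"
      using e by (auto simp: factorizations_def slot_factorizations_def mem_power_slots
                             sum_power_slots[of e, symmetric])
  qed
  finally show ?thesis .
qed

lemma lookup_peval: "Poly_Mapping.lookup (peval u f) \<gamma> =
   (\<Sum>p\<in>Poly_Mapping.keys f. Poly_Mapping.lookup f p *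
       Poly_Mapping.lookup (\<Prod>j\<in>UNIV. u j ^ snd p j) (\<gamma> - (\<lambda>i. of_int (fst p i))))"
  by (simp add: peval_eq_sum lookup_sum lookup_single_mult peval_term_def xmono_def)

section \<open>Polynomials vanishing at a vector of series\<close>

definition truncation ::
  "('n::finite \<Rightarrow> real) \<Rightarrow> ('m \<Rightarrow> ('n,'k::comm_ring_1) series) \<Rightarrow> real \<Rightarrow> real \<Rightarrow> ('m \<Rightarrow> ('n,'k) ppoly) \<Rightarrow> bool" where
  "truncation \<omega> \<psi> \<mu> W u \<longleftrightarrow>
     (\<forall>j \<gamma>. wdot \<omega> \<gamma> < W \<longrightarrow> Poly_Mapping.lookup (u j) \<gamma> = \<psi> j \<gamma>) \<and>
     (\<forall>j. order_ge \<omega> (u j) \<mu>) \<and> (\<forall>j \<gamma>. \<psi> j \<gamma> \<noteq> 0 \<longrightarrow> \<mu> \<le> wdot \<omega> \<gamma>)"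

definition vanishes_at ::
  "('n::finite \<Rightarrow> real) \<Rightarrow> ('m::finite \<Rightarrow> ('n,'k::comm_ring_1) series) \<Rightarrow> ('n,'m,'k) lpoly \<Rightarrow> bool" where
  "vanishes_at \<omega> \<psi> g \<longleftrightarrow> (\<forall>\<mu>. \<exists>c. \<forall>W u. truncation \<omega> \<psi> \<mu> W u \<longrightarrow> order_ge \<omega> (peval u g) (W + c))"

lemma vanishes_at_ideal: "is_ideal {g. vanishes_at \<omega> \<psi> g}"
proof -
  have "vanishes_at \<omega> \<psi> (f + g)" if f: "vanishes_at \<omega> \<psi> f" and g: "vanishes_at \<omega> \<psi> g" for f g
    unfolding vanishes_at_def
  proof
    fix \<mu>
    obtain c1 where c1: "\<forall>W u. truncation \<omega> \<psi> \<mu> W u \<longrightarrow> order_ge \<omega> (peval u f) (W + c1)"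
      using f unfolding vanishes_at_def by blast
    obtain c2 where c2: "\<forall>W u. truncation \<omega> \<psi> \<mu> W u \<longrightarrow> order_ge \<omega> (peval u g) (W + c2)"
      using g unfolding vanishes_at_def by blast
    have "order_ge \<omega> (peval u (f + g)) (W + min c1 c2)" if "truncation \<omega> \<psi> \<mu> W u" for W u
      unfolding peval_add
    proof (rule order_ge_add)
      show "order_ge \<omega> (peval u f) (W + min c1 c2)"
        by (rule order_ge_mono[of _ _ "W + c1"]) (use c1 that in auto)
      show "order_ge \<omega> (peval u g) (W + min c1 c2)"
        by (rule order_ge_mono[of _ _ "W + c2"]) (use c2 that in auto)
    qed
    then show "\<exists>c. \<forall>W u. truncation \<omega> \<psi> \<mu> W u \<longrightarrow> order_ge \<omega> (peval u (f + g)) (W + c)"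
      by blast
  qed
  moreover have "vanishes_at \<omega> \<psi> (r * f)" if f: "vanishes_at \<omega> \<psi> f" for r f
    unfolding vanishes_at_def
  proof
    fix \<mu>
    obtain c1 where c1: "\<forall>W u. truncation \<omega> \<psi> \<mu> W u \<longrightarrow> order_ge \<omega> (peval u f) (W + c1)"
      using f unfolding vanishes_at_def by blast
    obtain c2 where c2: "\<forall>u. (\<forall>j. order_ge \<omega> (u j) \<mu>) \<longrightarrow> order_ge \<omega> (peval u r) c2"
      using order_ge_peval_uniform by blast
    have "order_ge \<omega> (peval u (r * f)) (W + (c1 + c2))" if "truncation \<omega> \<psi> \<mu> W u" for W u
      using order_ge_mult[of \<omega> "peval u r" c2 "peval u f" "W + c1"] c1 c2 that
      by (simp add: truncation_def peval_mult add_ac)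
    then show "\<exists>c. \<forall>W u. truncation \<omega> \<psi> \<mu> W u \<longrightarrow> order_ge \<omega> (peval u (r * f)) (W + c)"
      by blast
  qed
  ultimately show ?thesis
    unfolding is_ideal_def by (auto simp: vanishes_at_def)
qed

lemma ideal_gen_subset: "is_ideal K \<Longrightarrow> S \<subseteq> K \<Longrightarrow> ideal_gen S \<subseteq> K"
  by (auto simp: ideal_gen_def)

lemma wdot_slot_less:
  assumes zero: "\<forall>j l. \<beta> j \<le> l \<longrightarrow> e j l = 0"
    and sum: "(\<Sum>j\<in>UNIV. \<Sum>l<\<beta> j. e j l) = \<delta>"
    and lower: "\<forall>j l. l < \<beta> j \<longrightarrow> \<mu> \<le> wdot \<omega> (e j l)"
    and total: "wdot \<omega> \<delta> < W + (real (card (power_slots \<beta>)) - 1) * \<mu>"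
    and l: "l < \<beta> j"
  shows "wdot \<omega> (e j l) < W"
proof -
  let ?T = "power_slots \<beta>"
  have t0: "(j, l) \<in> ?T" using l by (simp add: power_slots_def)
  have "wdot \<omega> \<delta> = (\<Sum>t\<in>?T. wdot \<omega> (e (fst t) (snd t)))"
    using sum[symmetric] by (simp add: wdot_sum sum_power_slots)
  also have "\<dots> = wdot \<omega> (e j l) + (\<Sum>t\<in>?T - {(j, l)}. wdot \<omega> (e (fst t) (snd t)))"
    using t0 by (simp add: sum.remove)
  finally have split: "wdot \<omega> \<delta> = wdot \<omega> (e j l) + (\<Sum>t\<in>?T - {(j, l)}. wdot \<omega> (e (fst t) (snd t)))" .
  have "of_nat (card (?T - {(j, l)})) * \<mu> \<le> (\<Sum>t\<in>?T - {(j, l)}. wdot \<omega> (e (fst t) (snd t)))"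
    by (rule sum_bounded_below) (use lower in \<open>auto simp: power_slots_def\<close>)
  moreover have "card ?T \<ge> 1"
    using t0 by (metis One_nat_def Suc_leI card_gt_0_iff empty_iff finite_power_slots)
  then have "of_nat (card (?T - {(j, l)})) = real (card ?T) - 1"
    using t0 by (simp add: card_Diff_singleton of_nat_diff)
  ultimately show ?thesis using split total by simp
qed

lemma lookup_prod_power_truncation:
  assumes u: "truncation \<omega> \<psi> \<mu> W u"
    and total: "wdot \<omega> \<delta> < W + (real (card (power_slots \<beta>)) - 1) * \<mu>"
  shows "Poly_Mapping.lookup (\<Prod>j\<in>UNIV. u j ^ \<beta> j) \<delta> = pow_prod_coeff \<psi> \<beta> \<delta>"
proof -
  from u have agree: "\<forall>j \<gamma>. wdot \<omega> \<gamma> < W \<longrightarrow> Poly_Mapping.lookup (u j) \<gamma> = \<psi> j \<gamma>"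
    and lower_u: "\<And>j \<gamma>. Poly_Mapping.lookup (u j) \<gamma> \<noteq> 0 \<Longrightarrow> \<mu> \<le> wdot \<omega> \<gamma>"
    and lower_\<psi>: "\<forall>j \<gamma>. \<psi> j \<gamma> \<noteq> 0 \<longrightarrow> \<mu> \<le> wdot \<omega> \<gamma>"
    by (auto simp: truncation_def order_ge_def in_keys_iff)
  have small: "wdot \<omega> (e j l) < W"
    if "e \<in> slot_factorizations (\<lambda>j. Poly_Mapping.lookup (u j)) \<beta> \<delta> \<or> e \<in> slot_factorizations \<psi> \<beta> \<delta>"
       "l < \<beta> j" for e j l
  proof (rule wdot_slot_less[OF _ _ _ total that(2)])
    show "\<forall>j l. \<beta> j \<le> l \<longrightarrow> e j l = 0" "(\<Sum>j\<in>UNIV. \<Sum>l<\<beta> j. e j l) = \<delta>"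
      using that(1) by (auto simp: slot_factorizations_def)
    show "\<forall>j l. l < \<beta> j \<longrightarrow> \<mu> \<le> wdot \<omega> (e j l)"
      using that(1) lower_u lower_\<psi> unfolding slot_factorizations_def by blast
  qed
  have "slot_factorizations (\<lambda>j. Poly_Mapping.lookup (u j)) \<beta> \<delta> = slot_factorizations \<psi> \<beta> \<delta>"
  proof (intro set_eqI iffI)
    fix e assume "e \<in> slot_factorizations (\<lambda>j. Poly_Mapping.lookup (u j)) \<beta> \<delta>"
    then show "e \<in> slot_factorizations \<psi> \<beta> \<delta>"
      using small[of e] agree by (auto simp: slot_factorizations_def)
  next
    fix e assume "e \<in> slot_factorizations \<psi> \<beta> \<delta>"
    then show "e \<in> slot_factorizations (\<lambda>j. Poly_Mapping.lookup (u j)) \<beta> \<delta>"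
      using small[of e] agree by (auto simp: slot_factorizations_def)
  qed
  then show ?thesis
    unfolding lookup_prod_power pow_prod_coeff_eq
    by (intro sum.cong refl prod.cong) (use small agree in auto)
qed

lemma vanishes_at_if_eval_series_zero:
  fixes f :: "('n::finite,'m::finite,'k::comm_ring_1) lpoly"
  assumes "eval_series f \<psi> = (\<lambda>_. 0)"
  shows "vanishes_at \<omega> \<psi> f"
  unfolding vanishes_at_def
proof
  fix \<mu>
  obtain c where c: "\<forall>p\<in>Poly_Mapping.keys f.
      c \<le> wdot \<omega> (\<lambda>i. of_int (fst p i)) + (real (card (power_slots (snd p))) - 1) * \<mu>"
    using finite_lower_bound[of "Poly_Mapping.keys f"
            "\<lambda>p. wdot \<omega> (\<lambda>i. of_int (fst p i)) + (real (card (power_slots (snd p))) - 1) * \<mu>"] by auto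
  have "order_ge \<omega> (peval u f) (W + c)" if u: "truncation \<omega> \<psi> \<mu> W u" for W u
    unfolding order_ge_def
  proof (rule ballI, rule ccontr)
    fix \<gamma> assume \<gamma>: "\<gamma> \<in> Poly_Mapping.keys (peval u f)" and "\<not> W + c \<le> wdot \<omega> \<gamma>"
    then have "wdot \<omega> \<gamma> < W + c" by simp
    then have "Poly_Mapping.lookup (peval u f) \<gamma> = eval_series f \<psi> \<gamma>"
      unfolding lookup_peval eval_series_def
      by (intro sum.cong refl arg_cong2[where f = "(*)"] lookup_prod_power_truncation[OF u])
        (use c in \<open>fastforce simp: wdot_diff\<close>)
    then show False using \<gamma> assms by (simp add: in_keys_iff)
  qed
  then show "\<exists>c. \<forall>W u. truncation \<omega> \<psi> \<mu> W u \<longrightarrow> order_ge \<omega> (peval u f) (W + c)"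
    by blast
qed

section \<open>The substitution \<open>x \<mapsto> x\<^sup>k\<close>\<close>

definition rescale :: "nat \<Rightarrow> ('n,'k::comm_ring_1) ppoly \<Rightarrow> ('n,'k) ppoly" where
  "rescale k P = pm_lift (Poly_Mapping.single 0) (\<lambda>\<gamma>. Poly_Mapping.single (\<lambda>i. of_nat k * \<gamma> i) 1) P"

interpretation rescale: pm_lift_hom "Poly_Mapping.single 0"
  "\<lambda>\<gamma>::'a \<Rightarrow> rat. Poly_Mapping.single (\<lambda>i. of_nat k * \<gamma> i) (1::'b::comm_ring_1)"
proof
  fix x y :: 'b and a b :: "'a \<Rightarrow> rat"
  show "Poly_Mapping.single 0 (x + y) = Poly_Mapping.single 0 x + Poly_Mapping.single 0 y"
    by (simp add: single_add)
  show "Poly_Mapping.single 0 (x * y) = Poly_Mapping.single 0 x * Poly_Mapping.single 0 y"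
    by (simp add: mult_single)
  show "Poly_Mapping.single 0 (1::'b) = 1"
    by simp
  show "Poly_Mapping.single (\<lambda>i. of_nat k * (a + b) i) (1::'b) =
      Poly_Mapping.single (\<lambda>i. of_nat k * a i) 1 * Poly_Mapping.single (\<lambda>i. of_nat k * b i) 1"
    by (simp add: mult_single plus_fun_def distrib_left)
  have "(\<lambda>i. of_nat k * (0 :: 'a \<Rightarrow> rat) i) = 0" by (simp add: fun_eq_iff)
  then show "Poly_Mapping.single (\<lambda>i. of_nat k * (0 :: 'a \<Rightarrow> rat) i) (1::'b) = 1" by simp
qed

lemma rescale_add: "rescale k (f + g) = rescale k f + rescale k g"
  by (simp add: rescale_def rescale.pm_lift_add)
lemma rescale_mult: "rescale k (f * g) = rescale k f * rescale k g"
  by (simp add: rescale_def rescale.pm_lift_mult)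
lemma rescale_sum: "rescale k (sum F A) = (\<Sum>i\<in>A. rescale k (F i))"
  by (simp add: rescale_def rescale.pm_lift_sum)
lemma rescale_prod: "rescale k (prod F A) = (\<Prod>i\<in>A. rescale k (F i))"
  by (simp add: rescale_def rescale.pm_lift_prod)
lemma rescale_power: "rescale k (f ^ n) = rescale k f ^ n"
  by (simp add: rescale_def rescale.pm_lift_power)
lemma rescale_single: "rescale k (Poly_Mapping.single a c) = Poly_Mapping.single (\<lambda>i. of_nat k * a i) c"
  by (simp add: rescale_def rescale.pm_lift_single mult_single)
lemma rescale_zero [simp]: "rescale k 0 = 0"
  by (simp add: rescale_def pm_lift_def)
lemma rescale_const: "rescale k (Poly_Mapping.single 0 a) = Poly_Mapping.single 0 a"
  by (simp add: rescale_single zero_fun_def)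
lemma rescale_xmono: "rescale k (xmono a) = xmono (\<lambda>i. int k * a i)"
  by (simp add: xmono_def rescale_single)

lemma lookup_rescale:
  assumes "k > 0"
  shows "Poly_Mapping.lookup (rescale k P) \<gamma> = Poly_Mapping.lookup P (\<lambda>i. \<gamma> i / of_nat k)"
proof -
  have eq: "((\<lambda>i. of_nat k * p i) = \<gamma>) = (p = (\<lambda>i. \<gamma> i / of_nat k))" for p
    using assms by (auto simp: fun_eq_iff field_simps)
  have "rescale k P = (\<Sum>p\<in>Poly_Mapping.keys P. Poly_Mapping.single (\<lambda>i. of_nat k * p i) (Poly_Mapping.lookup P p))"
    by (simp add: rescale_def pm_lift_def mult_single)
  then have "Poly_Mapping.lookup (rescale k P) \<gamma> =
      (\<Sum>p\<in>Poly_Mapping.keys P. if p = (\<lambda>i. \<gamma> i / of_nat k) then Poly_Mapping.lookup P p else 0)"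
    by (simp add: lookup_sum lookup_single when_def eq)
  also have "\<dots> = Poly_Mapping.lookup P (\<lambda>i. \<gamma> i / of_nat k)"
    by (simp add: in_keys_iff)
  finally show ?thesis .
qed

lemma order_ge_rescale:
  assumes "k > 0" "order_ge \<omega> P b"
  shows "order_ge \<omega> (rescale k P) (of_nat k * b)"
  unfolding order_ge_def
proof
  fix \<gamma> assume "\<gamma> \<in> Poly_Mapping.keys (rescale k P)"
  then have "(\<lambda>i. \<gamma> i / of_nat k) \<in> Poly_Mapping.keys P"
    using assms(1) by (simp add: in_keys_iff lookup_rescale)
  then have "b \<le> wdot \<omega> \<gamma> / of_nat k"
    using assms(2) by (auto simp: order_ge_def wdot_divide)
  then show "of_nat k * b \<le> wdot \<omega> \<gamma>"
    using assms(1) by (simp add: field_simps)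
qed

definition unscale :: "nat \<Rightarrow> ('n,'k::zero) ppoly \<Rightarrow> ('n,'k) ppoly" where
  "unscale k P = Poly_Mapping.map_key (\<lambda>\<gamma> i. of_nat k * \<gamma> i) P"

lemma lookup_unscale:
  assumes "k > 0"
  shows "Poly_Mapping.lookup (unscale k P) \<gamma> = Poly_Mapping.lookup P (\<lambda>i. of_nat k * \<gamma> i)"
proof -
  have inj: "inj (\<lambda>(\<gamma> :: 'n \<Rightarrow> rat) i. of_nat k * \<gamma> i)"
    using assms by (auto simp: inj_def fun_eq_iff)
  show ?thesis unfolding unscale_def map_key.rep_eq[OF inj] by simp
qed

lemma rescale_unscale: "k > 0 \<Longrightarrow> rescale k (unscale k P) = P"
  by (rule poly_mapping_eqI) (simp add: lookup_rescale lookup_unscale)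

lemma common_denominator_exists:
  assumes "finite Q"
  shows "\<exists>k::nat. k > 0 \<and> (\<forall>q\<in>Q. of_nat k * q \<in> (\<int> :: rat set))"
  using assms
proof (induction Q rule: finite_induct)
  case empty then show ?case by (intro exI[of _ 1]) auto
next
  case (insert q Q)
  then obtain k0 where k0: "k0 > 0" "\<forall>q\<in>Q. of_nat k0 * q \<in> \<int>" by blast
  obtain n d where nd: "quotient_of q = (n, d)" by (cases "quotient_of q")
  have d: "d > 0" using quotient_of_denom_pos[OF nd] .
  have "of_nat (k0 * nat d) * q = of_int (int k0 * n)"
    using d quotient_of_div[OF nd] by simp
  moreover have "of_nat (k0 * nat d) * q' \<in> \<int>" if "q' \<in> Q" for q'
  proof -
    have "of_int d * (of_nat k0 * q') \<in> \<int>"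
      using k0(2) that by (metis Ints_mult Ints_of_int)
    moreover have "of_nat (k0 * nat d) * q' = of_int d * (of_nat k0 * q')"
      using d by (simp add: mult_ac)
    ultimately show ?thesis by metis
  qed
  ultimately show ?case
    using k0(1) d by (intro exI[of _ "k0 * nat d"]) (auto simp del: of_nat_mult)
qed

lemma
  fixes \<Gamma> :: "'m::finite \<Rightarrow> 'n::finite \<Rightarrow> rat option"
  shows dG_pos: "dG \<Gamma> > 0"
    and dG_mult_Ints: "\<Gamma> i j = Some q \<Longrightarrow> of_nat (dG \<Gamma>) * q \<in> \<int>"
proof -
  obtain k :: nat where "k > 0" "\<forall>q\<in>(\<Union>i j. set_option (\<Gamma> i j)). of_nat k * q \<in> \<int>"
    using common_denominator_exists[of "\<Union>i j. set_option (\<Gamma> i j)"] by auto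
  then have "\<exists>k::nat. k > 0 \<and> (\<forall>i j q. \<Gamma> i j = Some q \<longrightarrow> of_nat k * q \<in> \<int>)"
    by force
  then have "dG \<Gamma> > 0 \<and> (\<forall>i j q. \<Gamma> i j = Some q \<longrightarrow> of_nat (dG \<Gamma>) * q \<in> \<int>)"
    unfolding dG_def by (rule LeastI_ex)
  then show "dG \<Gamma> > 0" "\<Gamma> i j = Some q \<Longrightarrow> of_nat (dG \<Gamma>) * q \<in> \<int>"
    by blast+
qed

definition leading_terms :: "('n,'m,'k::zero) wset \<Rightarrow> 'm \<Rightarrow> ('n,'k) ppoly" where
  "leading_terms D j = (case D of (\<eta>, \<Gamma>, c) \<Rightarrow>
     if \<Gamma> j = (\<lambda>_. None) then 0 else Poly_Mapping.single (\<lambda>i. the (\<Gamma> j i)) (c j))"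

lemma peval_subst_D:
  fixes f :: "('n::finite,'m::finite,'k::comm_ring_1) lpoly"
  assumes \<Gamma>: "\<forall>j. \<Gamma> j = (\<lambda>_. None) \<or> (\<forall>i. \<Gamma> j i \<noteq> None)"
    and u: "\<And>j. u j = rescale (dG \<Gamma>) (v j) - rescale (dG \<Gamma>) (leading_terms (\<eta>, \<Gamma>, c) j)"
  shows "peval u (subst_D (\<eta>, \<Gamma>, c) f) = rescale (dG \<Gamma>) (peval v f)"
proof -
  define k where "k = dG \<Gamma>"
  define S :: "'m \<Rightarrow> ('n,'m,'k) lpoly" where
    "S j = (if \<Gamma> j = (\<lambda>_. None) then 0 else mono (c j) (\<lambda>i. \<lfloor>of_nat k * the (\<Gamma> j i)\<rfloor>) 0)" for j
  have "(\<lambda>i. rat_of_int \<lfloor>of_nat k * the (\<Gamma> j i)\<rfloor>) = (\<lambda>i. of_nat k * the (\<Gamma> j i))"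
    if nonempty: "\<Gamma> j \<noteq> (\<lambda>_. None)" for j
  proof
    fix i
    obtain q where q: "\<Gamma> j i = Some q" using \<Gamma> nonempty by blast
    then have "of_nat k * the (\<Gamma> j i) \<in> \<int>" by (simp add: k_def dG_mult_Ints)
    then show "rat_of_int \<lfloor>of_nat k * the (\<Gamma> j i)\<rfloor> = of_nat k * the (\<Gamma> j i)"
      by (metis Ints_cases floor_of_int)
  qed
  then have "peval u (S j) = rescale k (leading_terms (\<eta>, \<Gamma>, c) j)" for j
    by (simp add: S_def leading_terms_def peval_mono peval_term_def xmono_def mult_single rescale_single)
  then have shift: "u j + peval u (S j) = rescale k (v j)" for j
    using u by (simp add: k_def)
  have "peval u (subst_D (\<eta>, \<Gamma>, c) f) = (\<Sum>p\<in>Poly_Mapping.keys f.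
      Poly_Mapping.single 0 (Poly_Mapping.lookup f p) * xmono (\<lambda>i. int k * fst p i) *
      (\<Prod>j\<in>UNIV. (u j + peval u (S j)) ^ snd p j))"
    unfolding subst_D_def Let_def
    by (simp add: peval_sum peval_mult peval_prod peval_power peval_add peval_yvar peval_mono
                  peval_term_def S_def k_def cong: if_cong)
  also have "\<dots> = rescale k (peval v f)"
    unfolding shift by (simp add: peval_eq_sum rescale_sum rescale_mult rescale_prod rescale_power rescale_const
                  rescale_xmono peval_term_def mult.assoc)
  finally show ?thesis by (simp add: k_def)
qed

lemma series_step_eq:
  "series_step (\<eta>, \<Gamma>, c) \<psi> j \<gamma> = \<psi> j (\<lambda>i. \<gamma> i / of_nat (dG \<Gamma>)) -
     (if \<Gamma> j \<noteq> (\<lambda>_. None) \<and> \<gamma> = (\<lambda>i. of_nat (dG \<Gamma>) * the (\<Gamma> j i)) then c j else 0)"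
  by (simp add: series_step_def Let_def)

lemma series_step_rescaled:
  fixes \<Gamma> :: "'m::finite \<Rightarrow> 'n::finite \<Rightarrow> rat option"
  shows "series_step (\<eta>, \<Gamma>, c) \<psi> j (\<lambda>i. of_nat (dG \<Gamma>) * \<gamma> i) =
     \<psi> j \<gamma> - (if \<Gamma> j \<noteq> (\<lambda>_. None) \<and> \<gamma> = (\<lambda>i. the (\<Gamma> j i)) then c j else 0)"
proof -
  have k: "dG \<Gamma> > 0" by (rule dG_pos)
  then have "((\<lambda>i. of_nat (dG \<Gamma>) * \<gamma> i) = (\<lambda>i. of_nat (dG \<Gamma>) * the (\<Gamma> j i))) = (\<gamma> = (\<lambda>i. the (\<Gamma> j i)))"
    by (auto simp: fun_eq_iff)
  with k show ?thesis by (simp add: series_step_eq)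
qed

lemma order_ge_unscale:
  assumes "k > 0" "order_ge \<omega> P \<mu>"
  shows "order_ge \<omega> (unscale k P) (\<mu> / of_nat k)"
  unfolding order_ge_def
proof
  fix \<gamma> assume "\<gamma> \<in> Poly_Mapping.keys (unscale k P)"
  then have "(\<lambda>i. of_nat k * \<gamma> i) \<in> Poly_Mapping.keys P"
    using assms(1) by (simp add: in_keys_iff lookup_unscale)
  then have "\<mu> \<le> of_nat k * wdot \<omega> \<gamma>"
    using assms(2) by (auto simp: order_ge_def wdot_of_nat_mult)
  then show "\<mu> / of_nat k \<le> wdot \<omega> \<gamma>"
    using assms(1) by (simp add: field_simps)
qed

lemma truncation_series_step:
  fixes \<psi> :: "'m::finite \<Rightarrow> ('n::finite,'k::comm_ring_1) series"
  assumes u: "truncation \<omega> (series_step (\<eta>, \<Gamma>, c) \<psi>) \<mu> W u"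
    and \<mu>': "\<mu>' \<le> \<mu> / of_nat (dG \<Gamma>)" "\<And>j. \<Gamma> j \<noteq> (\<lambda>_. None) \<Longrightarrow> \<mu>' \<le> wdot \<omega> (\<lambda>i. the (\<Gamma> j i))"
  shows "truncation \<omega> \<psi> \<mu>' (W / of_nat (dG \<Gamma>))
           (\<lambda>j. unscale (dG \<Gamma>) (u j) + leading_terms (\<eta>, \<Gamma>, c) j)"
  unfolding truncation_def
proof (intro conjI allI impI)
  define k where "k = dG \<Gamma>"
  have k: "k > 0" by (simp add: k_def dG_pos)
  have step: "series_step (\<eta>, \<Gamma>, c) \<psi> j (\<lambda>i. of_nat k * \<gamma> i) =
      \<psi> j \<gamma> - (if \<Gamma> j \<noteq> (\<lambda>_. None) \<and> \<gamma> = (\<lambda>i. the (\<Gamma> j i)) then c j else 0)" for j \<gamma>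
    unfolding k_def by (rule series_step_rescaled)
  fix j
  {
    fix \<gamma> assume "wdot \<omega> \<gamma> < W / of_nat (dG \<Gamma>)"
    then have "of_nat k * wdot \<omega> \<gamma> < W"
      using k by (simp add: k_def field_simps)
    then have "wdot \<omega> (\<lambda>i. of_nat k * \<gamma> i) < W"
      by (simp add: wdot_of_nat_mult)
    then show "Poly_Mapping.lookup (unscale (dG \<Gamma>) (u j) + leading_terms (\<eta>, \<Gamma>, c) j) \<gamma> = \<psi> j \<gamma>"
      using u k by (simp add: truncation_def lookup_add lookup_unscale step leading_terms_def
                              lookup_single when_def k_def[symmetric])
  next
    have "order_ge \<omega> (unscale k (u j)) \<mu>'"
      using order_ge_unscale[OF k, of \<omega> "u j" \<mu>] u \<mu>'(1) by (auto simp: truncation_def k_def intro: order_ge_mono)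
    moreover have "order_ge \<omega> (leading_terms (\<eta>, \<Gamma>, c) j) \<mu>'"
      using \<mu>'(2) by (simp add: leading_terms_def order_ge_single)
    ultimately show "order_ge \<omega> (unscale (dG \<Gamma>) (u j) + leading_terms (\<eta>, \<Gamma>, c) j) \<mu>'"
      by (simp add: order_ge_add k_def)
  next
    fix \<gamma> assume nz: "\<psi> j \<gamma> \<noteq> 0"
    show "\<mu>' \<le> wdot \<omega> \<gamma>"
    proof (cases "\<Gamma> j \<noteq> (\<lambda>_. None) \<and> \<gamma> = (\<lambda>i. the (\<Gamma> j i))")
      case True then show ?thesis using \<mu>'(2) by blast
    next
      case False
      then have "series_step (\<eta>, \<Gamma>, c) \<psi> j (\<lambda>i. of_nat k * \<gamma> i) \<noteq> 0"
        using nz by (simp only: step if_not_P[OF False] if_False diff_zero not_False_eq_True)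
      then have "\<mu> \<le> wdot \<omega> (\<lambda>i. of_nat k * \<gamma> i)"
        using u by (simp add: truncation_def)
      then have "\<mu> / of_nat k \<le> wdot \<omega> \<gamma>"
        using k by (simp add: wdot_of_nat_mult field_simps)
      then show ?thesis
        using \<mu>'(1) by (simp add: k_def)
    qed
  }
qed

lemma vanishes_at_series_step:
  fixes \<psi> :: "'m::finite \<Rightarrow> ('n::finite,'k::comm_ring_1) series"
  assumes f: "vanishes_at \<omega> \<psi> f" and \<Gamma>: "\<forall>j. \<Gamma> j = (\<lambda>_. None) \<or> (\<forall>i. \<Gamma> j i \<noteq> None)"
  shows "vanishes_at \<omega> (series_step (\<eta>, \<Gamma>, c) \<psi>) (subst_D (\<eta>, \<Gamma>, c) f)"
  unfolding vanishes_at_def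
proof
  fix \<mu>
  define k where "k = dG \<Gamma>"
  have k: "k > 0" by (simp add: k_def dG_pos)
  obtain m where m: "\<forall>j\<in>UNIV. m \<le> (if \<Gamma> j = (\<lambda>_. None) then 0 else wdot \<omega> (\<lambda>i. the (\<Gamma> j i)))"
    using finite_lower_bound[of "UNIV :: 'm set"
            "\<lambda>j. if \<Gamma> j = (\<lambda>_. None) then 0 else wdot \<omega> (\<lambda>i. the (\<Gamma> j i))"] by auto
  define \<mu>' where "\<mu>' = min m (\<mu> / of_nat k)"
  obtain c' where c': "\<forall>W v. truncation \<omega> \<psi> \<mu>' W v \<longrightarrow> order_ge \<omega> (peval v f) (W + c')"
    using f unfolding vanishes_at_def by blast
  have "order_ge \<omega> (peval u (subst_D (\<eta>, \<Gamma>, c) f)) (W + of_nat k * c')"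
    if u: "truncation \<omega> (series_step (\<eta>, \<Gamma>, c) \<psi>) \<mu> W u" for W u
  proof -
    define v where "v j = unscale k (u j) + leading_terms (\<eta>, \<Gamma>, c) j" for j
    have "truncation \<omega> \<psi> \<mu>' (W / of_nat k) v"
      unfolding v_def k_def
      by (rule truncation_series_step[OF u]) (use m in \<open>auto simp: \<mu>'_def k_def split: if_splits\<close>)
    then have "order_ge \<omega> (peval v f) (W / of_nat k + c')"
      using c' by blast
    then have "order_ge \<omega> (rescale k (peval v f)) (of_nat k * (W / of_nat k + c'))"
      by (rule order_ge_rescale[OF k])
    then have "order_ge \<omega> (rescale k (peval v f)) (W + of_nat k * c')"
      using k by (simp add: distrib_left)
    moreover have "peval u (subst_D (\<eta>, \<Gamma>, c) f) = rescale k (peval v f)"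
      unfolding k_def using k
      by (intro peval_subst_D[OF \<Gamma>]) (simp add: v_def k_def rescale_add rescale_unscale)
    ultimately show ?thesis by simp
  qed
  then show "\<exists>c0. \<forall>W u. truncation \<omega> (series_step (\<eta>, \<Gamma>, c) \<psi>) \<mu> W u \<longrightarrow>
               order_ge \<omega> (peval u (subst_D (\<eta>, \<Gamma>, c) f)) (W + c0)"
    by blast
qed

section \<open>Series with finitely many terms below every weight\<close>

definition finite_below :: "('n::finite \<Rightarrow> real) \<Rightarrow> ('m \<Rightarrow> ('n,'k::zero) series) \<Rightarrow> bool" where
  "finite_below \<omega> \<psi> \<longleftrightarrow> (\<forall>j B. finite {a. \<psi> j a \<noteq> 0 \<and> wdot \<omega> a \<le> B})"

lemma rat_cone_generator:
  assumes "finite V" "u \<in> V"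
  shows "(\<lambda>i. of_rat (u i)) \<in> rat_cone V"
proof -
  have "(\<Sum>v\<in>V. (if v = u then 1 else 0) * real_of_rat (v i)) = real_of_rat (u i)" for i
  proof -
    have "(\<Sum>v\<in>V. (if v = u then 1 else 0) * real_of_rat (v i)) =
        (\<Sum>v\<in>V. if v = u then real_of_rat (v i) else 0)"
      by (rule sum.cong) auto
    also have "\<dots> = real_of_rat (u i)" using assms by simp
    finally show ?thesis .
  qed
  then show ?thesis
    unfolding rat_cone_def by (intro CollectI exI[of _ "\<lambda>v. if v = u then 1 else 0"]) simp
qed

lemma rat_cone_sublevel_bounded:
  fixes \<omega> :: "'n::finite \<Rightarrow> real"
  assumes Q: "Q_lin_indep \<omega>" and V: "finite V"
    and nonneg: "\<forall>v\<in>rat_cone V. 0 \<le> (\<Sum>i\<in>UNIV. v i * \<omega> i)"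
  shows "\<exists>R. \<forall>v\<in>rat_cone V. (\<Sum>i\<in>UNIV. v i * \<omega> i) \<le> B \<longrightarrow> (\<forall>i. \<bar>v i\<bar> \<le> R)"
proof -
  define pv where "pv u = (\<Sum>i\<in>UNIV. of_rat (u i) * \<omega> i)" for u :: "'n \<Rightarrow> rat"
  have pv_nonneg: "pv u \<ge> 0" if "u \<in> V" for u
    using nonneg rat_cone_generator[OF V that] by (simp add: pv_def)
  have pv_pos: "pv u > 0" if u: "u \<in> V" "u \<noteq> 0" for u
  proof -
    have "pv u \<noteq> 0"
      using Q u(2) unfolding Q_lin_indep_def pv_def by (auto simp: fun_eq_iff)
    then show ?thesis using pv_nonneg[OF u(1)] by simp
  qed
  define \<delta> where "\<delta> = Min (insert 1 (pv ` (V - {0})))"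
  have \<delta>: "\<delta> > 0" unfolding \<delta>_def using V pv_pos by (subst Min_gr_iff) auto
  have \<delta>_le: "\<delta> \<le> pv u" if "u \<in> V" "u \<noteq> 0" for u
    unfolding \<delta>_def using V that by (intro Min_le) auto
  define L where "L = \<bar>B\<bar> / \<delta>"
  define R where "R = (\<Sum>i\<in>UNIV. L * (\<Sum>u\<in>V. \<bar>of_rat (u i)\<bar>))"
  have "\<bar>v i\<bar> \<le> R" if v: "v \<in> rat_cone V" "(\<Sum>i\<in>UNIV. v i * \<omega> i) \<le> B" for v i
  proof -
    from v(1) obtain l where l: "\<forall>u\<in>V. l u \<ge> (0::real)"
      and v_eq: "v = (\<lambda>i. \<Sum>u\<in>V. l u * of_rat (u i))"
      by (auto simp: rat_cone_def)
    have "(\<Sum>u\<in>V. l u * pv u) = (\<Sum>i\<in>UNIV. v i * \<omega> i)"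
      by (simp add: v_eq pv_def sum_distrib_left sum_distrib_right sum.swap[of _ V] mult.assoc)
    then have weighted: "(\<Sum>u\<in>V. l u * pv u) \<le> B" using v(2) by simp
    have l_le: "l u \<le> L" if "u \<in> V" "u \<noteq> 0" for u
    proof -
      have "l u * \<delta> \<le> l u * pv u" using l that \<delta>_le by (simp add: mult_left_mono)
      also have "\<dots> \<le> (\<Sum>u\<in>V. l u * pv u)"
        using V that l pv_nonneg by (intro member_le_sum) auto
      finally show ?thesis using weighted \<delta> by (simp add: L_def field_simps)
    qed
    have "\<bar>v i\<bar> \<le> (\<Sum>u\<in>V. \<bar>l u * of_rat (u i)\<bar>)"
      unfolding v_eq by (rule sum_abs)
    also have "\<dots> \<le> (\<Sum>u\<in>V. L * \<bar>of_rat (u i)\<bar>)"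
    proof (rule sum_mono)
      fix u assume u: "u \<in> V"
      show "\<bar>l u * of_rat (u i)\<bar> \<le> L * \<bar>of_rat (u i)\<bar>"
      proof (cases "u = 0")
        case False
        then show ?thesis using l_le[OF u False] l u by (simp add: abs_mult mult_right_mono)
      qed simp
    qed
    also have "\<dots> = L * (\<Sum>u\<in>V. \<bar>of_rat (u i)\<bar>)"
      by (simp add: sum_distrib_left)
    also have "\<dots> \<le> R"
      unfolding R_def using \<delta> by (intro member_le_sum) (simp_all add: L_def sum_nonneg)
    finally show ?thesis .
  qed
  then show ?thesis by blast
qed

lemma finite_bounded_lattice_points:
  assumes "k > 0"
  shows "finite {a :: 'n::finite \<Rightarrow> rat. (\<forall>i. of_nat k * a i \<in> \<int>) \<and> (\<forall>i. \<bar>of_rat (a i)\<bar> \<le> (R::real))}"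
proof -
  define N where "N = \<lceil>of_nat k * R\<rceil>"
  have "{a :: 'n \<Rightarrow> rat. (\<forall>i. of_nat k * a i \<in> \<int>) \<and> (\<forall>i. \<bar>of_rat (a i)\<bar> \<le> R)} \<subseteq>
        (\<lambda>z i. of_int (z i) / of_nat k) ` Pi\<^sub>E UNIV (\<lambda>_. {-N..N})"
  proof
    fix a assume a: "a \<in> {a. (\<forall>i. of_nat k * a i \<in> \<int>) \<and> (\<forall>i. \<bar>of_rat (a i)\<bar> \<le> R)}"
    define z where "z i = \<lfloor>of_nat k * a i\<rfloor>" for i
    have z: "of_int (z i) = of_nat k * a i" for i
      using a unfolding z_def by (auto elim!: Ints_cases)
    have "z i \<in> {-N..N}" for i
    proof -
      have "\<bar>real_of_int (z i)\<bar> = of_nat k * \<bar>of_rat (a i)\<bar>"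
        by (metis z abs_mult abs_of_nat of_rat_mult of_rat_of_int_eq of_rat_of_nat_eq)
      also have "\<dots> \<le> of_nat k * R" using a by (intro mult_left_mono) auto
      finally have "\<bar>real_of_int (z i)\<bar> \<le> of_int N" unfolding N_def by linarith
      then have "\<bar>z i\<bar> \<le> N" by (metis of_int_abs of_int_le_iff)
      then show ?thesis using abs_le_iff[of "z i" N] by auto
    qed
    then have "z \<in> Pi\<^sub>E UNIV (\<lambda>_. {-N..N})" by auto
    moreover have "a = (\<lambda>i. of_int (z i) / of_nat k)"
      using assms by (simp add: z fun_eq_iff)
    ultimately show "a \<in> (\<lambda>z i. of_int (z i) / of_nat k) ` Pi\<^sub>E UNIV (\<lambda>_. {-N..N})" by blast
  qed
  then show ?thesis by (rule finite_subset) (intro finite_imageI finite_PiE, simp_all)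
qed

lemma finite_below_if_omega_positive:
  assumes Q: "Q_lin_indep \<omega>" and pos_all: "\<forall>j. omega_positive \<omega> (\<psi> j)"
  shows "finite_below \<omega> \<psi>"
  unfolding finite_below_def
proof (intro allI)
  fix j B
  have pos: "omega_positive \<omega> (\<psi> j)" using pos_all by blast
  from pos obtain k :: nat where k: "k > 0" "\<forall>a\<in>supp (\<psi> j). \<forall>i. of_nat k * a i \<in> \<int>"
    unfolding omega_positive_def by blast
  from pos obtain \<gamma> V where V: "finite V" "\<forall>v\<in>rat_cone V. 0 \<le> (\<Sum>i\<in>UNIV. v i * \<omega> i)"
    and cone: "\<forall>a\<in>supp (\<psi> j). (\<lambda>i. of_rat (a i + \<gamma> i)) \<in> rat_cone V"
    unfolding omega_positive_def by blast
  obtain R where R: "\<forall>v\<in>rat_cone V. (\<Sum>i\<in>UNIV. v i * \<omega> i) \<le> B + wdot \<omega> \<gamma> \<longrightarrow> (\<forall>i. \<bar>v i\<bar> \<le> R)"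
    using rat_cone_sublevel_bounded[OF Q V] by blast
  define R' where "R' = R + (\<Sum>i\<in>UNIV. \<bar>of_rat (\<gamma> i) :: real\<bar>)"
  have bound: "\<bar>of_rat (a i)\<bar> \<le> R'" if a: "\<psi> j a \<noteq> 0" "wdot \<omega> a \<le> B" for a i
  proof -
    have mem: "(\<lambda>i. of_rat (a i + \<gamma> i)) \<in> rat_cone V"
      using cone a(1) by (simp add: supp_def)
    have "(\<Sum>i\<in>UNIV. of_rat (a i + \<gamma> i) * \<omega> i) = wdot \<omega> a + wdot \<omega> \<gamma>"
      by (simp add: wdot_def of_rat_add distrib_left sum.distrib mult.commute)
    then have "\<bar>of_rat (a i + \<gamma> i)\<bar> \<le> R"
      using R[rule_format, OF mem] a(2) by simp
    moreover have "\<bar>of_rat (\<gamma> i) :: real\<bar> \<le> (\<Sum>i\<in>UNIV. \<bar>of_rat (\<gamma> i)\<bar>)"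
      by (intro member_le_sum) auto
    ultimately show ?thesis
      unfolding R'_def of_rat_add by linarith
  qed
  have "{a. \<psi> j a \<noteq> 0 \<and> wdot \<omega> a \<le> B} \<subseteq>
      {a. (\<forall>i. of_nat k * a i \<in> \<int>) \<and> (\<forall>i. \<bar>of_rat (a i)\<bar> \<le> R')}"
  proof (rule subsetI, elim CollectE conjE, intro CollectI conjI allI)
    fix a i assume a: "\<psi> j a \<noteq> 0" "wdot \<omega> a \<le> B"
    then show "of_nat k * a i \<in> \<int>" using k(2) by (simp add: supp_def)
  next
    fix a i assume a: "\<psi> j a \<noteq> 0" "wdot \<omega> a \<le> B"
    then show "\<bar>of_rat (a i)\<bar> \<le> R'" by (rule bound)
  qed
  then show "finite {a. \<psi> j a \<noteq> 0 \<and> wdot \<omega> a \<le> B}"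
    by (rule finite_subset) (rule finite_bounded_lattice_points[OF k(1)])
qed

lemma finite_below_series_step:
  fixes \<psi> :: "'m::finite \<Rightarrow> ('n::finite,'k::comm_ring_1) series"
  assumes "finite_below \<omega> \<psi>"
  shows "finite_below \<omega> (series_step (\<eta>, \<Gamma>, c) \<psi>)"
  unfolding finite_below_def
proof (intro allI)
  fix j B
  define k where "k = dG \<Gamma>"
  have k: "k > 0" by (simp add: k_def dG_pos)
  have "{a. series_step (\<eta>, \<Gamma>, c) \<psi> j a \<noteq> 0 \<and> wdot \<omega> a \<le> B} \<subseteq>
      (\<lambda>\<gamma> i. of_nat k * \<gamma> i) ` {\<gamma>. \<psi> j \<gamma> \<noteq> 0 \<and> wdot \<omega> \<gamma> \<le> B / of_nat k} \<union>
      {\<lambda>i. of_nat k * the (\<Gamma> j i)}"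
  proof
    fix a assume a: "a \<in> {a. series_step (\<eta>, \<Gamma>, c) \<psi> j a \<noteq> 0 \<and> wdot \<omega> a \<le> B}"
    show "a \<in> (\<lambda>\<gamma> i. of_nat k * \<gamma> i) ` {\<gamma>. \<psi> j \<gamma> \<noteq> 0 \<and> wdot \<omega> \<gamma> \<le> B / of_nat k} \<union>
        {\<lambda>i. of_nat k * the (\<Gamma> j i)}"
    proof (cases "a = (\<lambda>i. of_nat k * the (\<Gamma> j i))")
      case False
      then have "\<psi> j (\<lambda>i. a i / of_nat k) \<noteq> 0"
        using a by (auto simp: series_step_eq k_def)
      moreover have "wdot \<omega> (\<lambda>i. a i / of_nat k) \<le> B / of_nat k"
        using a k by (simp add: wdot_divide divide_right_mono)
      moreover have "a = (\<lambda>i. of_nat k * (a i / of_nat k))"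
        using k by (simp add: fun_eq_iff)
      ultimately show ?thesis
        by (intro UnI1 image_eqI[where x = "\<lambda>i. a i / of_nat k"]) simp_all
    qed simp
  qed
  moreover have "finite {\<gamma>. \<psi> j \<gamma> \<noteq> 0 \<and> wdot \<omega> \<gamma> \<le> B / of_nat k}"
    using assms by (simp add: finite_below_def)
  ultimately show "finite {a. series_step (\<eta>, \<Gamma>, c) \<psi> j a \<noteq> 0 \<and> wdot \<omega> a \<le> B}"
    by (meson finite_Un finite_imageI finite.intros rev_finite_subset)
qed

lemma exists_minimal_term:
  assumes fin: "finite {a. s a \<noteq> 0 \<and> wdot \<omega> a \<le> wdot \<omega> a0}" and nz: "s a0 \<noteq> (0::'k::zero)"
  shows "\<exists>a. s a \<noteq> 0 \<and> (\<forall>b. s b \<noteq> 0 \<longrightarrow> wdot \<omega> a \<le> wdot \<omega> b)"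
proof -
  let ?S = "{a. s a \<noteq> 0 \<and> wdot \<omega> a \<le> wdot \<omega> a0}"
  obtain a where a: "a \<in> ?S" "wdot \<omega> a = Min (wdot \<omega> ` ?S)"
    using Min_in[of "wdot \<omega> ` ?S"] fin nz by fastforce
  have "wdot \<omega> a \<le> wdot \<omega> b" if "s b \<noteq> 0" for b
  proof (cases "wdot \<omega> b \<le> wdot \<omega> a0")
    case True then show ?thesis using a fin that by (auto intro: Min_le)
  next
    case False then show ?thesis using a by auto
  qed
  then show ?thesis using a by blast
qed

lemma def_data_cases:
  fixes \<psi> :: "'m \<Rightarrow> ('n::finite,'k::zero) series"
  assumes "finite_below \<omega> \<psi>" and Q: "Q_lin_indep \<omega>" and D: "def_data \<omega> \<psi> = (\<eta>, \<Gamma>, c)"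
  shows "((\<forall>a. \<psi> j a = 0) \<and> \<eta> j = \<infinity> \<and> \<Gamma> j = (\<lambda>_. None) \<and> c j = 0) \<or>
    (\<exists>a. \<psi> j a \<noteq> 0 \<and> (\<forall>b. \<psi> j b \<noteq> 0 \<longrightarrow> b \<noteq> a \<longrightarrow> wdot \<omega> a < wdot \<omega> b) \<and>
         \<eta> j = ereal (wdot \<omega> a) \<and> \<Gamma> j = (\<lambda>i. Some (a i)) \<and> c j = \<psi> j a)"
proof -
  have \<eta>: "\<eta> j = ord_s \<omega> (\<psi> j)"
    and \<Gamma>: "\<Gamma> j = (if supp (in_s \<omega> (\<psi> j)) = {} then (\<lambda>_. None)
          else (\<lambda>i. Some ((THE a. a \<in> supp (in_s \<omega> (\<psi> j))) i)))"
    and c: "c j = (if supp (in_s \<omega> (\<psi> j)) = {} then 0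
          else in_s \<omega> (\<psi> j) (THE a. a \<in> supp (in_s \<omega> (\<psi> j))))"
    using D[symmetric] unfolding def_data_def by (simp_all only: prod.inject)
  show ?thesis
  proof (cases "\<forall>a. \<psi> j a = 0")
    case True
    then have "ord_s \<omega> (\<psi> j) = \<infinity>" by (simp add: ord_s_def supp_def top_ereal_def)
    moreover from this have "supp (in_s \<omega> (\<psi> j)) = {}" by (simp add: supp_def in_s_def)
    ultimately show ?thesis using True \<eta> \<Gamma> c by simp
  next
    case False
    then obtain a where a: "\<psi> j a \<noteq> 0" "\<forall>b. \<psi> j b \<noteq> 0 \<longrightarrow> wdot \<omega> a \<le> wdot \<omega> b"
      using exists_minimal_term[of "\<psi> j"] assms(1) unfolding finite_below_def by blast
    have strict: "\<forall>b. \<psi> j b \<noteq> 0 \<longrightarrow> b \<noteq> a \<longrightarrow> wdot \<omega> a < wdot \<omega> b"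
      using a wdot_inj[OF Q] by (metis order_le_less)
    have ord: "ord_s \<omega> (\<psi> j) = ereal (wdot \<omega> a)"
      unfolding ord_s_def by (rule Inf_eqI) (use a in \<open>auto simp: supp_def\<close>)
    have "supp (in_s \<omega> (\<psi> j)) = {a}"
      using a(1) wdot_inj[OF Q, of _ a] by (auto simp: supp_def in_s_def ord)
    then show ?thesis using a strict ord \<eta> \<Gamma> c by (auto simp: in_s_def)
  qed
qed

lemma def_data_outside_Lam:
  assumes "finite_below \<omega> \<psi>" "Q_lin_indep \<omega>" "def_data \<omega> \<psi> = (\<eta>, \<Gamma>, c)" "j \<notin> Lam \<eta>"
  shows "(\<forall>a. \<psi> j a = 0) \<and> \<Gamma> j = (\<lambda>_. None) \<and> c j = 0 \<and> leading_terms (\<eta>, \<Gamma>, c) j = 0"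
  using def_data_cases[OF assms(1-3), of j] assms(4) by (auto simp: Lam_def leading_terms_def)

lemma def_data_in_Lam:
  assumes "finite_below \<omega> \<psi>" "Q_lin_indep \<omega>" "def_data \<omega> \<psi> = (\<eta>, \<Gamma>, c)" "j \<in> Lam \<eta>"
  obtains a where "\<psi> j a \<noteq> 0" "\<forall>b. \<psi> j b \<noteq> 0 \<longrightarrow> b \<noteq> a \<longrightarrow> wdot \<omega> a < wdot \<omega> b"
    "\<eta> j = ereal (wdot \<omega> a)" "\<Gamma> j = (\<lambda>i. Some (a i))" "c j = \<psi> j a"
    "leading_terms (\<eta>, \<Gamma>, c) j = Poly_Mapping.single a (\<psi> j a)"
proof -
  from def_data_cases[OF assms(1-3), of j] assms(4) obtain a where a: "\<psi> j a \<noteq> 0"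
    "\<forall>b. \<psi> j b \<noteq> 0 \<longrightarrow> b \<noteq> a \<longrightarrow> wdot \<omega> a < wdot \<omega> b"
    "\<eta> j = ereal (wdot \<omega> a)" "\<Gamma> j = (\<lambda>i. Some (a i))" "c j = \<psi> j a"
    by (auto simp: Lam_def)
  moreover have "leading_terms (\<eta>, \<Gamma>, c) j = Poly_Mapping.single a (\<psi> j a)"
    using a(4,5) by (simp add: leading_terms_def fun_eq_iff)
  ultimately show ?thesis using that by blast
qed

lemma def_data_not_MInfty:
  assumes "finite_below \<omega> \<psi>" "Q_lin_indep \<omega>" "def_data \<omega> \<psi> = (\<eta>, \<Gamma>, c)"
  shows "\<eta> j \<noteq> -\<infinity>"
proof (cases "j \<in> Lam \<eta>")
  case True
  then obtain a where "\<eta> j = ereal (wdot \<omega> a)" by (rule def_data_in_Lam[OF assms])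
  then show ?thesis by simp
qed (simp add: Lam_def)

lemma def_data_\<Gamma>_shape: "def_data \<omega> \<psi> = (\<eta>, \<Gamma>, c) \<Longrightarrow> \<forall>j. \<Gamma> j = (\<lambda>_. None) \<or> (\<forall>i. \<Gamma> j i \<noteq> None)"
  unfolding def_data_def by auto

lemma def_data_ord_increases:
  fixes \<psi> :: "'m::finite \<Rightarrow> ('n::finite,'k::comm_ring_1) series"
  assumes fin: "finite_below \<omega> \<psi>" and Q: "Q_lin_indep \<omega>" and D: "def_data \<omega> \<psi> = (\<eta>, \<Gamma>, c)"
    and D': "def_data \<omega> (series_step (\<eta>, \<Gamma>, c) \<psi>) = (\<eta>', \<Gamma>', c')"
    and j: "j \<in> Lam \<eta>'"
  shows "\<eta>' j > ereal (of_nat (dG \<Gamma>)) * \<eta> j"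
proof -
  define k where "k = dG \<Gamma>"
  have k: "k > 0" by (simp add: k_def dG_pos)
  from def_data_cases[OF finite_below_series_step[OF fin] Q D', of j] j obtain a' where
    a': "series_step (\<eta>, \<Gamma>, c) \<psi> j a' \<noteq> 0" "\<eta>' j = ereal (wdot \<omega> a')"
    by (auto simp: Lam_def)
  from def_data_cases[OF fin Q D, of j] show ?thesis
  proof (elim disjE exE conjE)
    assume "\<forall>a. \<psi> j a = 0" "\<Gamma> j = (\<lambda>_. None)"
    then show ?thesis using a' by (simp add: series_step_eq)
  next
    fix a assume a: "\<forall>b. \<psi> j b \<noteq> 0 \<longrightarrow> b \<noteq> a \<longrightarrow> wdot \<omega> a < wdot \<omega> b"
      "\<eta> j = ereal (wdot \<omega> a)" "\<Gamma> j = (\<lambda>i. Some (a i))" "c j = \<psi> j a"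
    have \<Gamma>j: "\<Gamma> j \<noteq> (\<lambda>_. None)" using a(3) by (simp add: fun_eq_iff)
    have ne: "a' \<noteq> (\<lambda>i. of_nat k * a i)"
    proof
      assume a'_eq: "a' = (\<lambda>i. of_nat k * a i)"
      have "(\<lambda>i. of_nat k * a i / of_nat k) = a" using k by (simp add: fun_eq_iff)
      then have "series_step (\<eta>, \<Gamma>, c) \<psi> j a' = \<psi> j a - c j"
        using \<Gamma>j a(3) by (simp add: series_step_eq a'_eq k_def[symmetric])
      then show False using a'(1) a(4) by simp
    qed
    then have "\<psi> j (\<lambda>i. a' i / of_nat k) \<noteq> 0"
      using a' a(3) by (auto simp: series_step_eq k_def)
    moreover have "(\<lambda>i. a' i / of_nat k) \<noteq> a"
      using ne k by (auto simp: fun_eq_iff field_simps)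
    ultimately have "wdot \<omega> a < wdot \<omega> a' / of_nat k"
      using a(1) by (auto simp: wdot_divide)
    then show ?thesis
      using a'(2) a(2) k by (simp add: k_def field_simps)
  qed
qed

section \<open>Initial forms at the leading terms\<close>

lemma wt_infinite:
  assumes "j \<notin> Lam \<eta>" "snd p j > 0"
  shows "wt \<omega> \<eta> p = \<infinity>"
proof -
  have "\<eta> j * ereal (of_nat (snd p j)) = \<infinity>" using assms by (simp add: Lam_def)
  then have "(\<Sum>j\<in>UNIV. \<eta> j * ereal (of_nat (snd p j))) = \<infinity>" by (subst sum_Pinfty) auto
  then show ?thesis by (simp add: wt_def)
qed

lemma wt_finite:
  assumes "\<forall>j. j \<notin> Lam \<eta> \<longrightarrow> snd p j = 0" and "\<forall>j. \<eta> j \<noteq> -\<infinity>"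
  shows "wt \<omega> \<eta> p =
    ereal (wdot \<omega> (\<lambda>i. of_int (fst p i)) + (\<Sum>j\<in>UNIV. of_nat (snd p j) * real_of_ereal (\<eta> j)))"
proof -
  have "\<eta> j * ereal (of_nat (snd p j)) = ereal (of_nat (snd p j) * real_of_ereal (\<eta> j))" for j
  proof (cases "j \<in> Lam \<eta>")
    case True
    then obtain x where "\<eta> j = ereal x" using assms(2) by (cases "\<eta> j") (auto simp: Lam_def)
    then show ?thesis by (simp add: mult.commute)
  next
    case False then show ?thesis using assms(1) by (simp add: zero_ereal_def[symmetric])
  qed
  then show ?thesis by (simp add: wt_def wdot_def)
qed

lemma wt_eq_ereal:
  assumes "wt \<omega> \<eta> p \<noteq> \<infinity>" and "\<forall>j. \<eta> j \<noteq> -\<infinity>"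
  shows "wt \<omega> \<eta> p =
    ereal (wdot \<omega> (\<lambda>i. of_int (fst p i)) + (\<Sum>j\<in>UNIV. of_nat (snd p j) * real_of_ereal (\<eta> j)))"
proof (rule wt_finite[OF _ assms(2)], intro allI impI)
  fix j assume j: "j \<notin> Lam \<eta>"
  show "snd p j = 0"
  proof (rule ccontr)
    assume "snd p j \<noteq> 0"
    then have "wt \<omega> \<eta> p = \<infinity>" using j by (intro wt_infinite) auto
    with assms(1) show False ..
  qed
qed

lemma ord_p_attained:
  assumes "ord_p \<omega> \<eta> g \<noteq> \<infinity>"
  obtains p where "p \<in> Poly_Mapping.keys g" "wt \<omega> \<eta> p = ord_p \<omega> \<eta> g"
proof -
  have "Poly_Mapping.keys g \<noteq> {}" using assms by (auto simp: ord_p_def top_ereal_def)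
  then have "ord_p \<omega> \<eta> g \<in> wt \<omega> \<eta> ` Poly_Mapping.keys g"
    unfolding ord_p_def by (simp add: cInf_eq_Min)
  then show ?thesis by (metis imageE that)
qed

lemma peval_in_p:
  assumes "ord_p \<omega> \<eta> g \<noteq> \<infinity>"
  shows "peval u (in_p \<omega> \<eta> g) = (\<Sum>p\<in>Poly_Mapping.keys g.
      Poly_Mapping.single 0 (if wt \<omega> \<eta> p = ord_p \<omega> \<eta> g then Poly_Mapping.lookup g p else 0) * peval_term u p)"
proof -
  have "finite {p. (if wt \<omega> \<eta> p = ord_p \<omega> \<eta> g then Poly_Mapping.lookup g p else 0) \<noteq> 0}"
    by (rule finite_subset[of _ "Poly_Mapping.keys g"]) (auto simp: in_keys_iff)
  then have lookup_in_p: "Poly_Mapping.lookup (in_p \<omega> \<eta> g) p =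
      (if wt \<omega> \<eta> p = ord_p \<omega> \<eta> g then Poly_Mapping.lookup g p else 0)" for p
    using assms by (simp add: in_p_def)
  then have "Poly_Mapping.keys (in_p \<omega> \<eta> g) \<subseteq> Poly_Mapping.keys g"
    by (auto simp: in_keys_iff split: if_splits)
  then show ?thesis
    unfolding peval_def by (subst peval.pm_lift_superset[of "Poly_Mapping.keys g"]) (auto simp: lookup_in_p)
qed

lemma degree_le_peval_in_p:
  assumes \<eta>: "\<forall>j. \<eta> j \<noteq> -\<infinity>" and r: "ord_p \<omega> \<eta> g = ereal r"
    and deg: "\<And>j. degree_le \<omega> (m j) (real_of_ereal (\<eta> j))"
  shows "degree_le \<omega> (peval m (in_p \<omega> \<eta> g)) r"
proof -
  have "ord_p \<omega> \<eta> g \<noteq> \<infinity>" using r by simp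
  then show ?thesis
    unfolding peval_in_p[OF \<open>ord_p \<omega> \<eta> g \<noteq> \<infinity>\<close>]
  proof (intro degree_le_sum)
    fix p
    show "degree_le \<omega> (Poly_Mapping.single 0
        (if wt \<omega> \<eta> p = ord_p \<omega> \<eta> g then Poly_Mapping.lookup g p else 0) * peval_term m p) r"
    proof (cases "wt \<omega> \<eta> p = ord_p \<omega> \<eta> g")
      case True
      have "wt \<omega> \<eta> p =
          ereal (wdot \<omega> (\<lambda>i. of_int (fst p i)) + (\<Sum>j\<in>UNIV. of_nat (snd p j) * real_of_ereal (\<eta> j)))"
        using True r by (intro wt_eq_ereal[OF _ \<eta>]) simp
      with True r have "degree_le \<omega> (peval_term m p) r"
        using degree_le_peval_term[of \<omega> m "\<lambda>j. real_of_ereal (\<eta> j)" p, OF deg] by simp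
      then show ?thesis
        using True by (simp add: degree_le_const_mult)
    qed simp
  qed
qed

lemma peval_term_eq_zero:
  assumes "j \<notin> Lam \<eta>" "snd p j > 0" "\<And>j. j \<notin> Lam \<eta> \<Longrightarrow> u j = 0"
  shows "peval_term u p = 0"
proof -
  have "u j ^ snd p j = 0"
    using assms by (simp add: zero_power)
  then have "(\<Prod>j\<in>UNIV. u j ^ snd p j) = 0"
    using prod_zero[of UNIV "\<lambda>j. u j ^ snd p j"] by auto
  then show ?thesis by (simp add: peval_term_def)
qed

lemma order_gt_peval_term_minus_initial:
  assumes \<eta>: "\<forall>j. \<eta> j \<noteq> -\<infinity>" and r: "ereal r \<le> wt \<omega> \<eta> p"
    and outside: "\<And>j. j \<notin> Lam \<eta> \<Longrightarrow> u j = 0 \<and> m j = 0"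
    and init: "\<And>j. same_initial \<omega> (u j) (m j) (real_of_ereal (\<eta> j))"
  shows "order_gt \<omega> (Poly_Mapping.single 0 a * peval_term u p -
           Poly_Mapping.single 0 (if wt \<omega> \<eta> p = ereal r then a else 0) * peval_term m p) r"
proof (cases "\<exists>j. j \<notin> Lam \<eta> \<and> snd p j > 0")
  case True
  then have "peval_term u p = 0" "peval_term m p = 0"
    using outside peval_term_eq_zero by blast+
  then show ?thesis by simp
next
  case False
  define w where "w = wdot \<omega> (\<lambda>i. of_int (fst p i)) + (\<Sum>j\<in>UNIV. of_nat (snd p j) * real_of_ereal (\<eta> j))"
  have "\<forall>j. j \<notin> Lam \<eta> \<longrightarrow> snd p j = 0"
    using False by auto
  then have wt: "wt \<omega> \<eta> p = ereal w"
    unfolding w_def by (rule wt_finite[OF _ \<eta>])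
  have near: "same_initial \<omega> (peval_term u p) (peval_term m p) w"
    unfolding w_def by (rule same_initial_peval_term[OF init])
  show ?thesis
  proof (cases "wt \<omega> \<eta> p = ereal r")
    case True
    with wt near have "order_gt \<omega> (peval_term u p - peval_term m p) r"
      by (simp add: same_initial_def)
    then have "order_gt \<omega> (Poly_Mapping.single 0 a * (peval_term u p - peval_term m p)) r"
      by (rule order_gt_const_mult)
    then show ?thesis using True by (simp add: right_diff_distrib)
  next
    case False
    with r wt have "r < w" by (simp add: less_le)
    then have "order_gt \<omega> (peval_term u p) r"
      using near order_ge_imp_gt[of \<omega> "peval_term u p" w r] by (simp add: same_initial_def)
    then show ?thesis
      using False by (simp add: order_gt_const_mult)
  qed
qed

lemma order_gt_peval_minus_in_p:
  assumes \<eta>: "\<forall>j. \<eta> j \<noteq> -\<infinity>" and r: "ord_p \<omega> \<eta> g = ereal r"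
    and outside: "\<And>j. j \<notin> Lam \<eta> \<Longrightarrow> u j = 0 \<and> m j = 0"
    and init: "\<And>j. same_initial \<omega> (u j) (m j) (real_of_ereal (\<eta> j))"
  shows "order_gt \<omega> (peval u g - peval m (in_p \<omega> \<eta> g)) r"
proof -
  have fin: "ord_p \<omega> \<eta> g \<noteq> \<infinity>" using r by simp
  have "peval u g - peval m (in_p \<omega> \<eta> g) = (\<Sum>p\<in>Poly_Mapping.keys g.
      Poly_Mapping.single 0 (Poly_Mapping.lookup g p) * peval_term u p -
      Poly_Mapping.single 0 (if wt \<omega> \<eta> p = ereal r then Poly_Mapping.lookup g p else 0) * peval_term m p)"
    unfolding peval_in_p[OF fin] peval_eq_sum[of u g] r by (simp add: sum_subtractf)
  moreover have "order_gt \<omega> (Poly_Mapping.single 0 (Poly_Mapping.lookup g p) * peval_term u p -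
      Poly_Mapping.single 0 (if wt \<omega> \<eta> p = ereal r then Poly_Mapping.lookup g p else 0) * peval_term m p) r"
    if "p \<in> Poly_Mapping.keys g" for p
  proof (rule order_gt_peval_term_minus_initial[OF \<eta>])
    show "ereal r \<le> wt \<omega> \<eta> p"
      unfolding r[symmetric] ord_p_def using that by (rule INF_lower)
  qed (use outside init in auto)
  ultimately show ?thesis
    by (simp add: order_gt_sum)
qed

lemma peval_in_p_eq_zero:
  assumes \<eta>: "\<forall>j. \<eta> j \<noteq> -\<infinity>"
    and outside: "\<And>j. j \<notin> Lam \<eta> \<Longrightarrow> u j = 0 \<and> m j = 0"
    and init: "\<And>j. same_initial \<omega> (u j) (m j) (real_of_ereal (\<eta> j))"
    and deg: "\<And>j. degree_le \<omega> (m j) (real_of_ereal (\<eta> j))"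
    and high: "order_gt \<omega> (peval u g) (real_of_ereal (ord_p \<omega> \<eta> g))"
  shows "peval m (in_p \<omega> \<eta> g) = 0"
proof (cases "ord_p \<omega> \<eta> g = \<infinity>")
  case True then show ?thesis by (simp add: in_p_def)
next
  case False
  then obtain p where "p \<in> Poly_Mapping.keys g" and p: "wt \<omega> \<eta> p = ord_p \<omega> \<eta> g"
    by (rule ord_p_attained)
  define r where "r = wdot \<omega> (\<lambda>i. of_int (fst p i)) + (\<Sum>j\<in>UNIV. of_nat (snd p j) * real_of_ereal (\<eta> j))"
  have "wt \<omega> \<eta> p = ereal r"
    unfolding r_def using False p by (intro wt_eq_ereal[OF _ \<eta>]) simp
  then have r: "ord_p \<omega> \<eta> g = ereal r"
    using p by simp
  have "order_gt \<omega> (peval u g - peval m (in_p \<omega> \<eta> g)) r"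
    by (rule order_gt_peval_minus_in_p[OF \<eta> r]) (simp_all add: outside init)
  with high have "order_gt \<omega> (peval m (in_p \<omega> \<eta> g)) r"
    using order_gt_diff[of \<omega> "peval u g" r "peval u g - peval m (in_p \<omega> \<eta> g)"] unfolding r by simp
  moreover have "degree_le \<omega> (peval m (in_p \<omega> \<eta> g)) r"
    using degree_le_peval_in_p[OF \<eta> r deg] .
  ultimately show ?thesis
    by (rule order_gt_degree_le_imp_zero)
qed
definition truncate :: "('n::finite \<Rightarrow> real) \<Rightarrow> real \<Rightarrow> ('n,'k::zero) series \<Rightarrow> ('n,'k) ppoly" where
  "truncate \<omega> W s = Abs_poly_mapping (\<lambda>\<gamma>. if wdot \<omega> \<gamma> < W then s \<gamma> else 0)"

lemma lookup_truncate:
  assumes "finite {a. s a \<noteq> 0 \<and> wdot \<omega> a \<le> W}"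
  shows "Poly_Mapping.lookup (truncate \<omega> W s) \<gamma> = (if wdot \<omega> \<gamma> < W then s \<gamma> else 0)"
proof -
  have "finite {\<gamma>. (if wdot \<omega> \<gamma> < W then s \<gamma> else 0) \<noteq> 0}"
    by (rule finite_subset[OF _ assms]) auto
  then show ?thesis by (simp add: truncate_def)
qed

lemma same_initial_truncate:
  assumes fin: "finite {a. s a \<noteq> 0 \<and> wdot \<omega> a \<le> W}"
    and a: "\<forall>b. s b \<noteq> 0 \<longrightarrow> b \<noteq> a \<longrightarrow> wdot \<omega> a < wdot \<omega> b" and W: "wdot \<omega> a < W"
  shows "same_initial \<omega> (truncate \<omega> W s) (Poly_Mapping.single a (s a)) (wdot \<omega> a)"
proof -
  have "order_gt \<omega> (truncate \<omega> W s - Poly_Mapping.single a (s a)) (wdot \<omega> a)"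
    using a W by (auto simp: order_gt_def in_keys_iff lookup_minus lookup_truncate[OF fin]
                             lookup_single when_def split: if_splits)
  moreover have "order_ge \<omega> (truncate \<omega> W s) (wdot \<omega> a)"
    using a by (fastforce simp: order_ge_def in_keys_iff lookup_truncate[OF fin] split: if_splits)
  ultimately show ?thesis
    by (simp add: same_initial_def order_ge_single)
qed

lemma def_data_support:
  assumes "finite_below \<omega> \<psi>" "Q_lin_indep \<omega>" "def_data \<omega> \<psi> = (\<eta>, \<Gamma>, c)" "\<psi> j \<gamma> \<noteq> 0"
  shows "j \<in> Lam \<eta>" and "real_of_ereal (\<eta> j) \<le> wdot \<omega> \<gamma>"
proof -
  show j: "j \<in> Lam \<eta>"
    using def_data_outside_Lam[OF assms(1-3)] assms(4) by blast
  obtain a where "\<forall>b. \<psi> j b \<noteq> 0 \<longrightarrow> b \<noteq> a \<longrightarrow> wdot \<omega> a < wdot \<omega> b" "\<eta> j = ereal (wdot \<omega> a)"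
    by (rule def_data_in_Lam[OF assms(1-3) j])
  then show "real_of_ereal (\<eta> j) \<le> wdot \<omega> \<gamma>"
    using assms(4) by (cases "\<gamma> = a") (auto intro: less_imp_le)
qed

lemma same_initial_truncate_leading_terms:
  assumes fin: "finite_below \<omega> \<psi>" and Q: "Q_lin_indep \<omega>" and D: "def_data \<omega> \<psi> = (\<eta>, \<Gamma>, c)"
    and j: "j \<in> Lam \<eta>" and W: "real_of_ereal (\<eta> j) < W"
  shows "same_initial \<omega> (truncate \<omega> W (\<psi> j)) (leading_terms (\<eta>, \<Gamma>, c) j) (real_of_ereal (\<eta> j))"
proof -
  obtain a where "\<forall>b. \<psi> j b \<noteq> 0 \<longrightarrow> b \<noteq> a \<longrightarrow> wdot \<omega> a < wdot \<omega> b" "\<eta> j = ereal (wdot \<omega> a)"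
    "leading_terms (\<eta>, \<Gamma>, c) j = Poly_Mapping.single a (\<psi> j a)"
    by (rule def_data_in_Lam[OF fin Q D j])
  then show ?thesis
    using W fin by (simp add: same_initial_truncate finite_below_def)
qed

lemma degree_le_leading_terms:
  assumes fin: "finite_below \<omega> \<psi>" and Q: "Q_lin_indep \<omega>" and D: "def_data \<omega> \<psi> = (\<eta>, \<Gamma>, c)"
  shows "degree_le \<omega> (leading_terms (\<eta>, \<Gamma>, c) j) (real_of_ereal (\<eta> j))"
proof (cases "j \<in> Lam \<eta>")
  case True
  obtain a where "\<eta> j = ereal (wdot \<omega> a)" "leading_terms (\<eta>, \<Gamma>, c) j = Poly_Mapping.single a (\<psi> j a)"
    by (rule def_data_in_Lam[OF fin Q D True])
  then show ?thesis by (simp add: degree_le_single)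
qed (simp add: def_data_outside_Lam[OF fin Q D])

lemma truncation_truncate:
  assumes fin: "finite_below \<omega> \<psi>" and lower: "\<And>j \<gamma>. \<psi> j \<gamma> \<noteq> 0 \<Longrightarrow> \<mu> \<le> wdot \<omega> \<gamma>"
  shows "truncation \<omega> \<psi> \<mu> W (\<lambda>j. truncate \<omega> W (\<psi> j))"
  using fin lower
  by (auto simp: truncation_def order_ge_def in_keys_iff lookup_truncate finite_below_def split: if_splits)

lemma initial_form_vanishes:
  fixes \<psi> :: "'m::finite \<Rightarrow> ('n::finite,'k::comm_ring_1) series"
  assumes fin: "finite_below \<omega> \<psi>" and Q: "Q_lin_indep \<omega>" and D: "def_data \<omega> \<psi> = (\<eta>, \<Gamma>, c)"
    and g: "vanishes_at \<omega> \<psi> g"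
  shows "peval (leading_terms (\<eta>, \<Gamma>, c)) (in_p \<omega> \<eta> g) = 0"
proof -
  define e where "e j = real_of_ereal (\<eta> j)" for j
  define \<mu> where "\<mu> = Min (range e)"
  have "\<mu> \<le> e j" for j
    unfolding \<mu>_def by (simp add: Min_le)
  then have "\<mu> \<le> wdot \<omega> \<gamma>" if "\<psi> j \<gamma> \<noteq> 0" for j \<gamma>
    using def_data_support(2)[OF fin Q D that] unfolding e_def by (meson order_trans)
  then have trunc: "truncation \<omega> \<psi> \<mu> W (\<lambda>j. truncate \<omega> W (\<psi> j))" for W
    by (rule truncation_truncate[OF fin])
  obtain cg where cg: "\<forall>W u. truncation \<omega> \<psi> \<mu> W u \<longrightarrow> order_ge \<omega> (peval u g) (W + cg)"
    using g unfolding vanishes_at_def by blast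
  define r where "r = real_of_ereal (ord_p \<omega> \<eta> g)"
  define W where "W = max (r - cg) (Max (range e)) + 1"
  define u where "u = (\<lambda>j. truncate \<omega> W (\<psi> j))"
  have "order_ge \<omega> (peval u g) (W + cg)"
    using cg trunc[of W] by (simp add: u_def)
  then have high: "order_gt \<omega> (peval u g) r"
    by (rule order_ge_imp_gt) (simp add: W_def)
  have outside: "u j = 0 \<and> leading_terms (\<eta>, \<Gamma>, c) j = 0" if "j \<notin> Lam \<eta>" for j
    using def_data_outside_Lam[OF fin Q D that] fin
    by (auto simp: u_def finite_below_def lookup_truncate intro!: poly_mapping_eqI)
  have W: "e j < W" for j
  proof -
    have "e j \<le> Max (range e)" by (simp add: Max_ge)
    moreover have "Max (range e) \<le> max (r - cg) (Max (range e))" by simp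
    ultimately show ?thesis unfolding W_def by linarith
  qed
  have "\<forall>j. \<eta> j \<noteq> -\<infinity>"
    using def_data_not_MInfty[OF fin Q D] by blast
  then show ?thesis
  proof (rule peval_in_p_eq_zero)
    show "u j = 0 \<and> leading_terms (\<eta>, \<Gamma>, c) j = 0" if "j \<notin> Lam \<eta>" for j
      using outside that by blast
    show "same_initial \<omega> (u j) (leading_terms (\<eta>, \<Gamma>, c) j) (real_of_ereal (\<eta> j))" for j
    proof (cases "j \<in> Lam \<eta>")
      case True
      then show ?thesis
        unfolding u_def using same_initial_truncate_leading_terms[OF fin Q D True] W[of j]
        by (simp add: e_def)
    qed (simp add: outside same_initial_def)
    show "degree_le \<omega> (leading_terms (\<eta>, \<Gamma>, c) j) (real_of_ereal (\<eta> j))" for j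
      by (rule degree_le_leading_terms[OF fin Q D])
    show "order_gt \<omega> (peval u g) (real_of_ereal (ord_p \<omega> \<eta> g))"
      using high by (simp add: r_def)
  qed
qed

definition is_monomial :: "('a \<Rightarrow>\<^sub>0 'k::zero) \<Rightarrow> bool" where
  "is_monomial P \<longleftrightarrow> (\<exists>\<gamma> d. d \<noteq> 0 \<and> P = Poly_Mapping.single \<gamma> d)"

lemma is_monomial_single: "d \<noteq> 0 \<Longrightarrow> is_monomial (Poly_Mapping.single \<gamma> d)"
  by (auto simp: is_monomial_def)

lemma is_monomial_one: "is_monomial (1 :: 'a::zero \<Rightarrow>\<^sub>0 'k::{zero_neq_one})"
  by (metis is_monomial_single single_one zero_neq_one)

lemma is_monomial_mult:
  assumes "is_monomial P" "is_monomial (Q :: 'a::comm_monoid_add \<Rightarrow>\<^sub>0 'k::idom)"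
  shows "is_monomial (P * Q)"
proof -
  obtain \<gamma> d \<gamma>' d' where "d \<noteq> 0" "P = Poly_Mapping.single \<gamma> d" "d' \<noteq> 0" "Q = Poly_Mapping.single \<gamma>' d'"
    using assms by (auto simp: is_monomial_def)
  then show ?thesis by (simp add: mult_single is_monomial_single)
qed

lemma is_monomial_power: "is_monomial P \<Longrightarrow> is_monomial (P ^ n :: 'a::comm_monoid_add \<Rightarrow>\<^sub>0 'k::idom)"
  by (induction n) (auto intro: is_monomial_mult is_monomial_one)

lemma is_monomial_prod:
  "(\<And>j. j \<in> A \<Longrightarrow> is_monomial (F j)) \<Longrightarrow> is_monomial (prod F A :: 'a::comm_monoid_add \<Rightarrow>\<^sub>0 'k::idom)"
  by (induction A rule: infinite_finite_induct) (auto intro: is_monomial_mult is_monomial_one)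

lemma is_monomial_nonzero: "is_monomial P \<Longrightarrow> P \<noteq> 0"
  by (auto simp: is_monomial_def) (metis lookup_single_eq lookup_zero)

definition eval_at_one :: "('n,'k::comm_ring_1) ppoly \<Rightarrow> 'k" where
  "eval_at_one P = pm_lift id (\<lambda>_. 1) P"

interpretation eval_at_one: pm_lift_hom id "\<lambda>_::'a \<Rightarrow> rat. 1 :: 'b::comm_ring_1"
  by unfold_locales auto

lemma eval_at_one_peval:
  assumes "\<And>j. eval_at_one (m j) = c j"
  shows "eval_at_one (peval m f) = eval_one f c"
  using assms
  by (simp add: peval_eq_sum eval_one_def eval_at_one_def eval_at_one.pm_lift_sum eval_at_one.pm_lift_mult
                eval_at_one.pm_lift_single eval_at_one.pm_lift_prod eval_at_one.pm_lift_power peval_term_def xmono_def)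

lemma in_tau_if_monomials_annihilate:
  fixes m :: "'m::finite \<Rightarrow> ('n::finite,'k::idom) ppoly"
  assumes annihilates: "In_ideal \<omega> \<eta> J \<subseteq> {f. peval m f = 0}"
    and monomial: "\<And>j. j \<in> Lam \<eta> \<Longrightarrow> is_monomial (m j)"
  shows "in_tau \<omega> \<eta> J"
  unfolding in_tau_def
proof (intro notI, elim exE conjE)
  fix c0 a b assume c0: "c0 \<noteq> 0" and b: "\<forall>j. j \<notin> Lam \<eta> \<longrightarrow> b j = 0"
    and mem: "mono c0 a b \<in> In_ideal \<omega> \<eta> J"
  have "is_monomial (m j ^ b j)" for j
    using monomial[of j] b by (cases "j \<in> Lam \<eta>") (simp_all add: is_monomial_power is_monomial_one)
  then have "is_monomial (peval m (mono c0 a b))"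
    using c0 by (auto simp: peval_mono peval_term_def xmono_def
                      intro!: is_monomial_mult is_monomial_prod is_monomial_single)
  then show False
    using annihilates mem is_monomial_nonzero by blast
qed

lemma starting_set_def_data:
  fixes \<psi> :: "'m::finite \<Rightarrow> ('n::finite,'k::idom) series"
  assumes fin: "finite_below \<omega> \<psi>" and Q: "Q_lin_indep \<omega>" and D: "def_data \<omega> \<psi> = (\<eta>, \<Gamma>, c)"
    and J: "\<forall>g\<in>J. vanishes_at \<omega> \<psi> g"
  shows "starting_set \<omega> J (\<eta>, \<Gamma>, c)"
proof -
  define m where "m = leading_terms (\<eta>, \<Gamma>, c)"
  have outside: "\<Gamma> j = (\<lambda>_. None) \<and> c j = 0 \<and> m j = 0" if "j \<notin> Lam \<eta>" for j
    using def_data_outside_Lam[OF fin Q D that] by (simp add: m_def)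
  have inside: "\<exists>a. c j \<noteq> 0 \<and> \<eta> j = ereal (wdot \<omega> a) \<and> \<Gamma> j = (\<lambda>i. Some (a i)) \<and>
      m j = Poly_Mapping.single a (c j)" if "j \<in> Lam \<eta>" for j
    using def_data_in_Lam[OF fin Q D that] by (metis m_def)
  have annihilates: "In_ideal \<omega> \<eta> J \<subseteq> {f. peval m f = 0}"
    unfolding In_ideal_def
  proof (rule ideal_gen_subset[OF peval_ideal])
    show "in_p \<omega> \<eta> ` J \<union> yvar ` (- Lam \<eta>) \<subseteq> {f. peval m f = 0}"
      using initial_form_vanishes[OF fin Q D] J outside by (auto simp: m_def peval_yvar)
  qed
  have "omega_set \<omega> (\<eta>, \<Gamma>, c)"
    using def_data_not_MInfty[OF fin Q D]
    unfolding omega_set_def using outside inside by fastforce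
  moreover have "in_tau \<omega> \<eta> J"
  proof (rule in_tau_if_monomials_annihilate[OF annihilates])
    fix j assume "j \<in> Lam \<eta>"
    then obtain a where "c j \<noteq> 0" "m j = Poly_Mapping.single a (c j)"
      using inside by blast
    then show "is_monomial (m j)" by (simp add: is_monomial_single)
  qed
  moreover have "eval_one f c = 0" if "f \<in> In_ideal \<omega> \<eta> J" for f
  proof -
    have "eval_at_one (m j) = c j" for j
      using outside[of j] inside[of j]
      by (cases "j \<in> Lam \<eta>") (auto simp: eval_at_one_def eval_at_one.pm_lift_single eval_at_one.pm_lift_zero)
    then have "eval_one f c = eval_at_one (peval m f)"
      by (simp add: eval_at_one_peval)
    also have "\<dots> = 0"
      using annihilates that by (simp add: eval_at_one_def eval_at_one.pm_lift_zero subset_iff)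
    finally show ?thesis .
  qed
  ultimately show ?thesis
    unfolding starting_set_def by simp
qed

lemma phi_seq_vanishes:
  fixes \<phi> :: "'m::finite \<Rightarrow> ('n::finite,'k::comm_ring_1) series"
  assumes Q: "Q_lin_indep \<omega>" and sol: "omega_solution \<omega> I \<phi>"
  shows "finite_below \<omega> (phi_seq \<omega> \<phi> i) \<and>
         (\<forall>g\<in>ideal_seq I (seq \<omega> \<phi>) i. vanishes_at \<omega> (phi_seq \<omega> \<phi> i) g)"
proof (induction i)
  case 0
  have "finite_below \<omega> \<phi>"
    using sol by (intro finite_below_if_omega_positive[OF Q]) (simp add: omega_solution_def)
  moreover have "\<forall>g\<in>I. vanishes_at \<omega> \<phi> g"
    using sol vanishes_at_if_eval_series_zero unfolding omega_solution_def by blast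
  ultimately show ?case by simp
next
  case (Suc i)
  obtain \<eta> \<Gamma> c where D: "seq \<omega> \<phi> i = (\<eta>, \<Gamma>, c)"
    by (cases "seq \<omega> \<phi> i")
  have step: "phi_seq \<omega> \<phi> (Suc i) = series_step (\<eta>, \<Gamma>, c) (phi_seq \<omega> \<phi> i)"
    using D by (simp add: seq_def)
  have \<Gamma>: "\<forall>j. \<Gamma> j = (\<lambda>_. None) \<or> (\<forall>i. \<Gamma> j i \<noteq> None)"
    using D by (intro def_data_\<Gamma>_shape) (simp add: seq_def)
  have "ideal_seq I (seq \<omega> \<phi>) (Suc i) \<subseteq> {g. vanishes_at \<omega> (phi_seq \<omega> \<phi> (Suc i)) g}"
    unfolding ideal_seq.simps ideal_D_def D step
  proof (rule ideal_gen_subset[OF vanishes_at_ideal], rule image_subsetI)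
    fix f assume "f \<in> ideal_seq I (seq \<omega> \<phi>) i"
    then have "vanishes_at \<omega> (phi_seq \<omega> \<phi> i) f"
      using Suc by blast
    then show "subst_D (\<eta>, \<Gamma>, c) f \<in> {g. vanishes_at \<omega> (series_step (\<eta>, \<Gamma>, c) (phi_seq \<omega> \<phi> i)) g}"
      using vanishes_at_series_step[OF _ \<Gamma>] by blast
  qed
  moreover have "finite_below \<omega> (phi_seq \<omega> \<phi> (Suc i))"
    unfolding step using Suc by (simp add: finite_below_series_step)
  ultimately show ?case by blast
qed

lemma seq_starting_set:
  fixes \<phi> :: "'m::finite \<Rightarrow> ('n::finite,'k::idom) series"
  assumes Q: "Q_lin_indep \<omega>" and sol: "omega_solution \<omega> I \<phi>"
  shows "starting_set \<omega> (ideal_seq I (seq \<omega> \<phi>) i) (seq \<omega> \<phi> i)"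
proof -
  obtain \<eta> \<Gamma> c where D: "def_data \<omega> (phi_seq \<omega> \<phi> i) = (\<eta>, \<Gamma>, c)"
    by (cases "def_data \<omega> (phi_seq \<omega> \<phi> i)")
  then have "seq \<omega> \<phi> i = (\<eta>, \<Gamma>, c)"
    by (simp add: seq_def)
  then show ?thesis
    using starting_set_def_data[OF _ Q D] phi_seq_vanishes[OF Q sol, of i] by simp
qed

lemma seq_ord_increases:
  fixes \<phi> :: "'m::finite \<Rightarrow> ('n::finite,'k::comm_ring_1) series"
  assumes Q: "Q_lin_indep \<omega>" and sol: "omega_solution \<omega> I \<phi>"
    and j: "j \<in> Lam (fst (seq \<omega> \<phi> (Suc i)))"
  shows "fst (seq \<omega> \<phi> (Suc i)) j > ereal (of_nat (dG (fst (snd (seq \<omega> \<phi> i))))) * fst (seq \<omega> \<phi> i) j"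
proof -
  obtain \<eta> \<Gamma> c where D: "def_data \<omega> (phi_seq \<omega> \<phi> i) = (\<eta>, \<Gamma>, c)"
    by (cases "def_data \<omega> (phi_seq \<omega> \<phi> i)")
  obtain \<eta>' \<Gamma>' c' where D': "def_data \<omega> (series_step (\<eta>, \<Gamma>, c) (phi_seq \<omega> \<phi> i)) = (\<eta>', \<Gamma>', c')"
    by (cases "def_data \<omega> (series_step (\<eta>, \<Gamma>, c) (phi_seq \<omega> \<phi> i))")
  have "seq \<omega> \<phi> i = (\<eta>, \<Gamma>, c)" "seq \<omega> \<phi> (Suc i) = (\<eta>', \<Gamma>', c')"
    using D D' by (simp_all add: seq_def)
  then show ?thesis
    using def_data_ord_increases[OF _ Q D D'] phi_seq_vanishes[OF Q sol, of i] j by simp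
qed

theorem proposition14p3:
  fixes \<omega> :: "'n::finite \<Rightarrow> real"
    and I :: "('n, 'm::finite, 'k::field_char_0) lpoly set"
    and \<phi> :: "'m \<Rightarrow> ('n, 'k) series"
  assumes "alg_closed TYPE('k)"
    and "Q_lin_indep \<omega>"
    and "is_ideal I"
    and "admissible I"
    and "omega_solution \<omega> I \<phi>"
  shows "omega_sequence \<omega> I (seq \<omega> \<phi>)"
  unfolding omega_sequence_def
proof (intro conjI allI impI ballI)
  fix i show "starting_set \<omega> (ideal_seq I (seq \<omega> \<phi>) i) (seq \<omega> \<phi> i)"
    by (rule seq_starting_set[OF assms(2,5)])
next
  fix i j assume "1 \<le> i" and j: "j \<in> Lam (fst (seq \<omega> \<phi> i))"
  then obtain i' where "i = Suc i'" by (cases i) auto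
  then show "fst (seq \<omega> \<phi> i) j > ereal (of_nat (dG (fst (snd (seq \<omega> \<phi> (i - 1)))))) * fst (seq \<omega> \<phi> (i - 1)) j"
    using seq_ord_increases[OF assms(2,5)] j by simp
qed

end
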